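(* Consider a general state space model as described in the context, with observations $y_1,y_2,\dots$ held fixed. Assume that for every $t\ge 1$ the map $x\mapsto a_t(x,\cdot)$ is continuous from the state space into $L_1(\mu)$, and that for all $t$, all $x$ and all $y$, $$0<b_t(x,y)\le C(t,y)<\infty .$$ Then for every $t\ge 0$ and every $y_{1:t}$, $\|f^N_{t|t}-f_{t|t}\|_1=\int|f^N_{t|t}(x)-f_{t|t}(x)|\,d\mu(x)\to 0$ in probability as $N\to\infty$.
   Context: State space model: the state space $E$ is a complete separable metric space with Borel $\sigma$-field and a reference measure $\mu$; the observation space carries a measure $\nu$. $(X_t)_{t\ge0}$ is a Markov chain with $X_0\sim a_0(x)\,d\mu(x)$ and $X_t\mid X_{t-1}=x'\sim a_t(x',x)\,d\mu(x)$; conditionally on $(X_t)$ the $Y_t$ are independent with $Y_t\mid X_t=x\sim b_t(x,y)\,d\nu(y)$. The observations $y_1,y_2,\dots$ are fixed; $f_{t|t}=f_{t|t}(\cdot\mid y_{1:t})$ denotes the conditional density of $X_t$ given $Y_{1:t}=y_{1:t}$, given by $f_{0|0}=a_0$ and $f_{t|t}(x)\propto b_t(x,y_t)\int f_{t-1|t-1}(x')a_t(x',x)\,d\mu(x')$. Monte Carlo filter (i.i.d. version, e.g. via accept–reject): $x_{1,0},\dots,x_{N,0}$ are i.i.d. from $f^N_{0|0}=a_0$; given all particles up to time $t-1$, $x_{1,t},\dots,x_{N,t}$ are i.i.d. from the density $$f^N_{t|t}(x)\propto b_t(x,y_t)\,\frac1N\sum_{j=1}^N a_t(x_{j,t-1},x).$$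 Probabilities refer only to the randomness of the Monte Carlo sampling. *)

theory Defs
  imports "HOL-Probability.Probability"
begin

text \<open>Exact filter density f_{t|t} (observations y fixed).
  a0: initial density, a t x' x: transition density at time t,
  b t x y: observation density at time t, all w.r.t. mu (resp. nu).\<close>
primrec filt :: "'a measure \<Rightarrow> ('a \<Rightarrow> real) \<Rightarrow> (nat \<Rightarrow> 'a \<Rightarrow> 'a \<Rightarrow> real)
    \<Rightarrow> (nat \<Rightarrow> 'a \<Rightarrow> 'b \<Rightarrow> real) \<Rightarrow> (nat \<Rightarrow> 'b) \<Rightarrow> nat \<Rightarrow> 'a \<Rightarrow> real" where
  "filt \<mu> a0 a b y 0 = a0"
| "filt \<mu> a0 a b y (Suc t) =
     (let g = (\<lambda>x. b (Suc t) x (y (Suc t)) * (\<integral>x'. filt \<mu> a0 a b y t x' * a (Suc t) x' x \<partial>\<mu>))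
      in (\<lambda>x. g x / (\<integral>z. g z \<partial>\<mu>)))"

text \<open>Monte Carlo density f^N_{t|t} at time t >= 1, given the particles xs 0, ..., xs (N-1)
  of time t-1.\<close>
definition mc_dens :: "'a measure \<Rightarrow> (nat \<Rightarrow> 'a \<Rightarrow> 'a \<Rightarrow> real)
    \<Rightarrow> (nat \<Rightarrow> 'a \<Rightarrow> 'b \<Rightarrow> real) \<Rightarrow> (nat \<Rightarrow> 'b) \<Rightarrow> nat \<Rightarrow> nat \<Rightarrow> (nat \<Rightarrow> 'a) \<Rightarrow> 'a \<Rightarrow> real" where
  "mc_dens \<mu> a b y N t xs =
     (let g = (\<lambda>x. b t x (y t) * ((\<Sum>j<N. a t (xs j) x) / real N))
      in (\<lambda>x. g x / (\<integral>z. g z \<partial>\<mu>)))"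

definition filtN :: "'a measure \<Rightarrow> ('a \<Rightarrow> real) \<Rightarrow> (nat \<Rightarrow> 'a \<Rightarrow> 'a \<Rightarrow> real)
    \<Rightarrow> (nat \<Rightarrow> 'a \<Rightarrow> 'b \<Rightarrow> real) \<Rightarrow> (nat \<Rightarrow> 'b) \<Rightarrow> nat \<Rightarrow> nat \<Rightarrow> (nat \<Rightarrow> 'a) \<Rightarrow> 'a \<Rightarrow> real" where
  "filtN \<mu> a0 a b y N t xs = (if t = 0 then a0 else mc_dens \<mu> a b y N t xs)"

text \<open>Law of the particle vector (x_{1,t},...,x_{N,t}) (indexed 0..N-1) of the i.i.d. Monte Carlo
  filter: i.i.d. from a0 at time 0; given the time-t particles, i.i.d. from f^N_{t+1|t+1}.\<close>
primrec particles :: "'a measure \<Rightarrow> ('a \<Rightarrow> real) \<Rightarrow> (nat \<Rightarrow> 'a \<Rightarrow> 'a \<Rightarrow> real)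
    \<Rightarrow> (nat \<Rightarrow> 'a \<Rightarrow> 'b \<Rightarrow> real) \<Rightarrow> (nat \<Rightarrow> 'b) \<Rightarrow> nat \<Rightarrow> nat \<Rightarrow> (nat \<Rightarrow> 'a) measure" where
  "particles \<mu> a0 a b y N 0 = PiM {..<N} (\<lambda>_. density \<mu> (\<lambda>x. ennreal (a0 x)))"
| "particles \<mu> a0 a b y N (Suc t) =
     bind (particles \<mu> a0 a b y N t)
       (\<lambda>xs. PiM {..<N} (\<lambda>_. density \<mu> (\<lambda>x. ennreal (mc_dens \<mu> a b y N (Suc t) xs x))))"

definition L1_dist :: "'a measure \<Rightarrow> ('a \<Rightarrow> real) \<Rightarrow> ('a \<Rightarrow> real) \<Rightarrow> ennreal" where
  "L1_dist \<mu> f g = (\<integral>\<^sup>+x. ennreal \<bar>f x - g x\<bar> \<partial>\<mu>)"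

end

theory Submission
  imports Defs
begin

text \<open>
  The exact filter arises from the previous one by a prediction step (integration against the
  Markov kernel a_t, an L1-contraction) and a Bayes reweighting with b_t(., y_t), which is
  L1-Lipschitz at every density because 0 < b_t <= C. The Monte Carlo filter instead reweights
  the kernel average (1/N) sum_j a_t(x_j, .) of N i.i.d. samples x_j from its own previous
  density q. Splitting a_t(x, z) into min(a_t(x, z), M) for z in a set S of finite measure plus
  a tail, a variance bound shows that the expected L1-error of this average is at most
  M mu(S) / sqrt N plus twice the tail mass under q, and the tail mass moves by at most the
  L1-distance from q to the exact previous density h. So the error is small uniformly on an
  L1-ball around h. By induction on t the previous Monte Carlo density lies in that ball with
  high probability, and conditionally on the previous particles Markov's inequality bounds the
  probability of a deviation at time t.
\<close>

section \<open>Probability densities and the L1 distance\<close>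

definition prob_density :: "'a measure \<Rightarrow> ('a \<Rightarrow> real) \<Rightarrow> bool" where
  "prob_density M q \<longleftrightarrow> q \<in> borel_measurable M \<and> (\<forall>x. 0 \<le> q x) \<and> (\<integral>\<^sup>+x. ennreal (q x) \<partial>M) = 1"

lemma prob_density_measurable: "prob_density M q \<Longrightarrow> q \<in> borel_measurable M"
  and prob_density_nonneg: "prob_density M q \<Longrightarrow> 0 \<le> q x"
  and prob_density_nn_integral: "prob_density M q \<Longrightarrow> (\<integral>\<^sup>+x. ennreal (q x) \<partial>M) = 1"
  by (auto simp: prob_density_def)

lemma prob_density_integrable: "prob_density M q \<Longrightarrow> integrable M q"
  by (auto simp: prob_density_def intro!: integrableI_nonneg)

lemma prob_space_density_prob_density:
  assumes "prob_density M q"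
  shows "prob_space (density M (\<lambda>x. ennreal (q x)))"
proof (rule prob_spaceI)
  have "emeasure (density M (\<lambda>x. ennreal (q x))) (space M)
      = (\<integral>\<^sup>+x. ennreal (q x) * indicator (space M) x \<partial>M)"
    using prob_density_measurable[OF assms] by (intro emeasure_density) auto
  also have "\<dots> = (\<integral>\<^sup>+x. ennreal (q x) \<partial>M)"
    by (intro nn_integral_cong) (simp add: indicator_def)
  finally show "emeasure (density M (\<lambda>x. ennreal (q x))) (space (density M (\<lambda>x. ennreal (q x)))) = 1"
    using prob_density_nn_integral[OF assms] by simp
qed

lemma prob_space_PiM_density:
  "prob_density M q \<Longrightarrow> prob_space (PiM I (\<lambda>_. density M (\<lambda>x. ennreal (q x))))"
  by (intro prob_space_PiM prob_space_density_prob_density)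

lemma sets_PiM_density: "sets (PiM I (\<lambda>_. density M f)) = sets (PiM I (\<lambda>_. M))"
  by (intro sets_PiM_cong) auto

lemma L1_dist_triangle:
  assumes "f \<in> borel_measurable M" "g \<in> borel_measurable M" "h \<in> borel_measurable M"
  shows "L1_dist M f h \<le> L1_dist M f g + L1_dist M g h"
proof -
  have "L1_dist M f h \<le> (\<integral>\<^sup>+x. ennreal \<bar>f x - g x\<bar> + ennreal \<bar>g x - h x\<bar> \<partial>M)"
    unfolding L1_dist_def
    by (intro nn_integral_mono) (auto simp flip: ennreal_plus intro!: ennreal_leI)
  also have "\<dots> = L1_dist M f g + L1_dist M g h"
    unfolding L1_dist_def using assms by (intro nn_integral_add) auto
  finally show ?thesis .
qed

lemma L1_dist_eq_integral:
  assumes "integrable M f" "integrable M g"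
  shows "L1_dist M f g = ennreal (\<integral>x. \<bar>f x - g x\<bar> \<partial>M)"
  unfolding L1_dist_def using assms by (intro nn_integral_eq_integral) auto

lemma L1_dist_measurable:
  assumes "sigma_finite_measure M"
    and "(\<lambda>p. f (fst p) (snd p)) \<in> borel_measurable (R \<Otimes>\<^sub>M M)" "g \<in> borel_measurable M"
  shows "(\<lambda>w. L1_dist M (f w) g) \<in> borel_measurable R"
proof -
  have "(\<lambda>(w, x). ennreal \<bar>f w x - g x\<bar>) \<in> borel_measurable (R \<Otimes>\<^sub>M M)"
    using assms(2,3) by (simp add: case_prod_beta') measurable
  then show ?thesis
    unfolding L1_dist_def by (rule sigma_finite_measure.borel_measurable_nn_integral[OF assms(1)])
qed

lemma mult_emeasure_le_nn_integral:
  assumes [measurable]: "u \<in> borel_measurable M"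
  shows "ennreal \<epsilon> * emeasure M {x \<in> space M. ennreal \<epsilon> < u x} \<le> (\<integral>\<^sup>+x. u x \<partial>M)"
proof -
  have "ennreal \<epsilon> * emeasure M {x \<in> space M. ennreal \<epsilon> < u x}
      = (\<integral>\<^sup>+x. ennreal \<epsilon> * indicator {x \<in> space M. ennreal \<epsilon> < u x} x \<partial>M)"
    by (simp add: nn_integral_cmult_indicator)
  also have "\<dots> \<le> (\<integral>\<^sup>+x. u x \<partial>M)"
    by (intro nn_integral_mono) (auto simp: indicator_def less_imp_le)
  finally show ?thesis .
qed

lemma (in prob_space) nn_integral_le_add_emeasure:
  assumes "B \<in> events" and "\<And>w. w \<in> space M \<Longrightarrow> w \<notin> B \<Longrightarrow> f w \<le> c"
    and "\<And>w. w \<in> space M \<Longrightarrow> f w \<le> 1"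
  shows "(\<integral>\<^sup>+w. f w \<partial>M) \<le> c + emeasure M B"
proof -
  have "f w \<le> c + indicator B w" if "w \<in> space M" for w
    using assms(2,3)[OF that] by (cases "w \<in> B") (auto intro: add_increasing)
  then have "(\<integral>\<^sup>+w. f w \<partial>M) \<le> (\<integral>\<^sup>+w. c + indicator B w \<partial>M)"
    by (intro nn_integral_mono)
  also have "\<dots> = c + emeasure M B"
    using assms(1) by (simp add: nn_integral_add emeasure_space_1)
  finally show ?thesis .
qed

lemma (in sigma_finite_measure) measurable_PiM_density:
  assumes Q: "(\<lambda>p. Q (fst p) (snd p)) \<in> borel_measurable (R \<Otimes>\<^sub>M M)"
    and dens: "\<And>w. prob_density M (Q w)"
  shows "(\<lambda>w. PiM I (\<lambda>_. density M (\<lambda>x. ennreal (Q w x))))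
    \<in> measurable R (subprob_algebra (PiM I (\<lambda>_. M)))"
proof (rule measurable_subprob_algebra_generated[OF sets_PiM Int_stable_prod_algebra
      prod_algebra_sets_into_space])
  fix w
  show "subprob_space (PiM I (\<lambda>_. density M (\<lambda>x. ennreal (Q w x))))"
    by (intro prob_space_imp_subprob_space prob_space_PiM_density dens)
  show "sets (PiM I (\<lambda>_. density M (\<lambda>x. ennreal (Q w x)))) = sets (PiM I (\<lambda>_. M))"
    by (rule sets_PiM_density)
next
  have "emeasure (PiM I (\<lambda>_. density M (\<lambda>x. ennreal (Q w x)))) (\<Pi>\<^sub>E i\<in>I. space M) = 1" for w
  proof -
    interpret prob_space "PiM I (\<lambda>_. density M (\<lambda>x. ennreal (Q w x)))"
      by (intro prob_space_PiM_density dens)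
    show ?thesis using emeasure_space_1 by (simp add: space_PiM)
  qed
  then show "(\<lambda>w. emeasure (PiM I (\<lambda>_. density M (\<lambda>x. ennreal (Q w x)))) (\<Pi>\<^sub>E i\<in>I. space M))
      \<in> borel_measurable R"
    by simp
next
  fix A assume "A \<in> prod_algebra I (\<lambda>_. M)"
  then obtain J E where A: "A = prod_emb I (\<lambda>_. M) J (\<Pi>\<^sub>E j\<in>J. E j)"
    and J: "finite J" "J \<subseteq> I" and E: "\<And>i. i \<in> J \<Longrightarrow> E i \<in> sets M"
    by (rule prod_algebraE) auto
  have "emeasure (PiM I (\<lambda>_. density M (\<lambda>x. ennreal (Q w x)))) A
      = (\<Prod>i\<in>J. \<integral>\<^sup>+x. ennreal (Q w x) * indicator (E i) x \<partial>M)" for w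
  proof -
    have "A = prod_emb I (\<lambda>_. density M (\<lambda>x. ennreal (Q w x))) J (\<Pi>\<^sub>E j\<in>J. E j)"
      unfolding A by (simp add: prod_emb_def)
    then show ?thesis
      using J E prob_density_measurable[OF dens]
      by (simp add: emeasure_PiM_emb prob_space_density_prob_density[OF dens] emeasure_density)
  qed
  moreover have "(\<lambda>w. \<Prod>i\<in>J. \<integral>\<^sup>+x. ennreal (Q w x) * indicator (E i) x \<partial>M) \<in> borel_measurable R"
  proof (intro borel_measurable_prod_ennreal borel_measurable_nn_integral)
    fix i assume "i \<in> J"
    then show "(\<lambda>(w, x). ennreal (Q w x) * indicator (E i) x) \<in> borel_measurable (R \<Otimes>\<^sub>M M)"
      using Q E by (simp add: case_prod_beta') measurable
  qed
  ultimately show "(\<lambda>w. emeasure (PiM I (\<lambda>_. density M (\<lambda>x. ennreal (Q w x)))) A) \<in> borel_measurable R"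
    by simp
qed

section \<open>Sample means of i.i.d. variables\<close>

context prob_space
begin

lemma nn_integral_PiM_component:
  assumes "j \<in> I" "f \<in> borel_measurable M"
  shows "(\<integral>\<^sup>+xs. f (xs j) \<partial>PiM I (\<lambda>_. M)) = (\<integral>\<^sup>+x. f x \<partial>M)"
proof -
  have "distr (PiM I (\<lambda>_. M)) M (\<lambda>xs. xs j) = M"
    using assms by (intro distr_PiM_component) (auto simp: prob_space_axioms)
  then show ?thesis
    using assms by (metis nn_integral_distr measurable_component_singleton)
qed

lemma integral_PiM_component:
  fixes f :: "'a \<Rightarrow> real"
  assumes "j \<in> I" "f \<in> borel_measurable M"
  shows "(\<integral>xs. f (xs j) \<partial>PiM I (\<lambda>_. M)) = (\<integral>x. f x \<partial>M)"
proof -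
  have "distr (PiM I (\<lambda>_. M)) M (\<lambda>xs. xs j) = M"
    using assms by (intro distr_PiM_component) (auto simp: prob_space_axioms)
  then show ?thesis
    using assms by (metis integral_distr measurable_component_singleton)
qed

lemma integral_PiM_two_components:
  fixes f g :: "'a \<Rightarrow> real"
  assumes "finite I" "j \<in> I" "k \<in> I" "j \<noteq> k" "integrable M f" "integrable M g"
  shows "(\<integral>xs. f (xs j) * g (xs k) \<partial>PiM I (\<lambda>_. M)) = expectation f * expectation g"
proof -
  interpret product_sigma_finite "\<lambda>_. M" by unfold_locales
  define F where "F i = (if i = j then f else if i = k then g else (\<lambda>_. 1))" for i
  have "(\<integral>xs. (\<Prod>i\<in>I. F i (xs i)) \<partial>PiM I (\<lambda>_. M)) = (\<Prod>i\<in>I. integral\<^sup>L M (F i))"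
    using assms by (intro product_integral_prod) (auto simp: F_def)
  moreover have "(\<Prod>i\<in>I. F i (xs i)) = f (xs j) * g (xs k)" for xs
    using assms by (subst prod.mono_neutral_right[of I "{j, k}"]) (auto simp: F_def)
  moreover have "(\<Prod>i\<in>I. integral\<^sup>L M (F i)) = expectation f * expectation g"
    using assms by (subst prod.mono_neutral_right[of I "{j, k}"]) (auto simp: F_def prob_space)
  ultimately show ?thesis by simp
qed

lemma nn_integral_sample_mean:
  assumes "1 \<le> N" "f \<in> borel_measurable M" "\<And>x. 0 \<le> f x"
  shows "(\<integral>\<^sup>+xs. ennreal ((\<Sum>j<N. f (xs j)) / real N) \<partial>PiM {..<N} (\<lambda>_. M))
    = (\<integral>\<^sup>+x. ennreal (f x) \<partial>M)"
proof -
  have "(\<integral>\<^sup>+xs. ennreal ((\<Sum>j<N. f (xs j)) / real N) \<partial>PiM {..<N} (\<lambda>_. M))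
      = (\<integral>\<^sup>+xs. (\<Sum>j<N. ennreal (f (xs j))) * ennreal (1 / real N) \<partial>PiM {..<N} (\<lambda>_. M))"
    using assms(3) by (intro nn_integral_cong) (simp add: sum_nonneg divide_inverse flip: ennreal_mult)
  also have "\<dots> = (\<Sum>j<N. \<integral>\<^sup>+xs. ennreal (f (xs j)) \<partial>PiM {..<N} (\<lambda>_. M)) * ennreal (1 / real N)"
    using assms(2) by (simp add: nn_integral_multc nn_integral_sum)
  also have "(\<Sum>j<N. \<integral>\<^sup>+xs. ennreal (f (xs j)) \<partial>PiM {..<N} (\<lambda>_. M)) = of_nat N * (\<integral>\<^sup>+x. ennreal (f x) \<partial>M)"
    using assms(2) by (subst sum.cong[OF refl nn_integral_PiM_component]) auto
  also have "\<dots> * ennreal (1 / real N) = (\<integral>\<^sup>+x. ennreal (f x) \<partial>M) * (of_nat N * ennreal (1 / real N))"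
    by (simp add: ac_simps)
  also have "of_nat N * ennreal (1 / real N) = 1"
    using assms(1) by (simp add: ennreal_of_nat_eq_real_of_nat flip: ennreal_mult)
  finally show ?thesis by simp
qed

lemma integral_PiM_centered_product:
  fixes Y :: "'a \<Rightarrow> real"
  assumes I: "finite I" "j \<in> I" "k \<in> I"
    and Y[measurable]: "Y \<in> borel_measurable M" and bounded: "\<And>x. \<bar>Y x\<bar> \<le> B"
  shows "(\<integral>xs. (Y (xs j) - expectation Y) * (Y (xs k) - expectation Y) \<partial>PiM I (\<lambda>_. M))
    = (if j = k then variance Y else 0)"
proof (cases "j = k")
  case True
  then show ?thesis
    using integral_PiM_component[OF I(2), of "\<lambda>x. (Y x - expectation Y) * (Y x - expectation Y)"]
    by (simp add: power2_eq_square)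
next
  case False
  have "integrable M Y"
    using bounded by (intro integrable_const_bound[where B=B]) auto
  then have "integrable M (\<lambda>x. Y x - expectation Y)" "expectation (\<lambda>x. Y x - expectation Y) = 0"
    by (simp_all add: prob_space)
  with integral_PiM_two_components[OF I False, of "\<lambda>x. Y x - expectation Y" "\<lambda>x. Y x - expectation Y"]
  show ?thesis using False by simp
qed

lemma integral_sample_mean_deviation_sq:
  fixes Y :: "'a \<Rightarrow> real"
  assumes N: "1 \<le> N" and Y[measurable]: "Y \<in> borel_measurable M" and bounded: "\<And>x. \<bar>Y x\<bar> \<le> B"
  shows "(\<integral>xs. ((\<Sum>j<N. Y (xs j)) / real N - expectation Y)\<^sup>2 \<partial>PiM {..<N} (\<lambda>_. M))
    = variance Y / real N"
proof -
  let ?P = "PiM {..<N} (\<lambda>_. M)"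
  interpret P: prob_space ?P by (intro prob_space_PiM) (auto simp: prob_space_axioms)
  define D where "D x = Y x - expectation Y" for x
  have "\<bar>expectation Y\<bar> \<le> B"
    using bounded by (intro order_trans[OF integral_abs_bound] integral_le_const)
      (auto intro!: integrable_const_bound[where B=B])
  then have D_bounded: "\<bar>D x\<bar> \<le> 2 * B" for x
    unfolding D_def using bounded[of x] by linarith
  have iDD: "integrable ?P (\<lambda>xs. D (xs j) * D (xs k))" if "j < N" "k < N" for j k
  proof (intro P.integrable_const_bound[where B="2 * B * (2 * B)"] AE_I2)
    fix xs show "norm (D (xs j) * D (xs k)) \<le> 2 * B * (2 * B)"
      unfolding norm_mult real_norm_def abs_mult using D_bounded abs_ge_zero order_trans
      by (intro mult_mono) blast+
  qed (use that in \<open>simp add: D_def\<close>)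
  have "((\<Sum>j<N. Y (xs j)) / real N - expectation Y)\<^sup>2
      = (\<Sum>j<N. \<Sum>k<N. D (xs j) * D (xs k)) / (real N)\<^sup>2" for xs
  proof -
    have "(\<Sum>j<N. Y (xs j)) / real N - expectation Y = (\<Sum>j<N. D (xs j)) / real N"
      using N by (simp add: D_def sum_subtractf field_simps)
    then show ?thesis by (simp add: power2_eq_square sum_product power_divide)
  qed
  moreover have "(\<integral>xs. (\<Sum>j<N. \<Sum>k<N. D (xs j) * D (xs k)) \<partial>?P)
      = (\<Sum>j<N. \<Sum>k<N. \<integral>xs. D (xs j) * D (xs k) \<partial>?P)"
    using iDD by (subst Bochner_Integration.integral_sum)
      (auto intro!: Bochner_Integration.integrable_sum sum.cong Bochner_Integration.integral_sum)
  moreover have "(\<Sum>j<N. \<Sum>k<N. \<integral>xs. D (xs j) * D (xs k) \<partial>?P) = (\<Sum>j<N. variance Y)"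
  proof (intro sum.cong refl)
    fix j assume j: "j \<in> {..<N}"
    have "(\<Sum>k<N. \<integral>xs. D (xs j) * D (xs k) \<partial>?P) = (\<Sum>k<N. if j = k then variance Y else 0)"
      unfolding D_def using j bounded by (intro sum.cong refl integral_PiM_centered_product) auto
    then show "(\<Sum>k<N. \<integral>xs. D (xs j) * D (xs k) \<partial>?P) = variance Y" using j by simp
  qed
  ultimately show ?thesis
    using N by (simp add: power2_eq_square)
qed

lemma nn_integral_abs_sample_mean_deviation_le:
  fixes Y :: "'a \<Rightarrow> real"
  assumes N: "1 \<le> N" and Y[measurable]: "Y \<in> borel_measurable M"
    and Y_nonneg: "\<And>x. 0 \<le> Y x" and Y_le: "\<And>x. Y x \<le> B"
  shows "(\<integral>\<^sup>+xs. ennreal \<bar>(\<Sum>j<N. Y (xs j)) / real N - expectation Y\<bar> \<partial>PiM {..<N} (\<lambda>_. M))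
    \<le> ennreal (B / sqrt N)"
proof -
  let ?P = "PiM {..<N} (\<lambda>_. M)"
  interpret P: prob_space ?P by (intro prob_space_PiM) (auto simp: prob_space_axioms)
  define W where "W xs = (\<Sum>j<N. Y (xs j)) / real N - expectation Y" for xs
  have B: "0 \<le> B" using Y_nonneg Y_le order_trans by blast
  have Y_bounded: "\<bar>Y x\<bar> \<le> B" for x using Y_nonneg[of x] Y_le[of x] by simp
  have Y_sq: "(Y x)\<^sup>2 \<le> B\<^sup>2" for x using power_mono[OF Y_le Y_nonneg, of x 2] by simp
  have iY: "integrable M Y"
    using Y_bounded by (intro integrable_const_bound[where B=B]) auto
  have iYY: "integrable M (\<lambda>x. (Y x)\<^sup>2)"
    using Y_sq by (intro integrable_const_bound[where B="B\<^sup>2"]) auto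
  have mean: "0 \<le> (\<Sum>j<N. Y (xs j)) / real N \<and> (\<Sum>j<N. Y (xs j)) / real N \<le> B" for xs
  proof -
    have "(\<Sum>j<N. Y (xs j)) \<le> (\<Sum>j<N. B)" by (intro sum_mono Y_le)
    then show ?thesis using N Y_nonneg by (simp add: sum_nonneg divide_le_eq mult.commute)
  qed
  have "0 \<le> expectation Y" "expectation Y \<le> B"
    using Y_nonneg iY Y_le by (auto intro!: integral_le_const)
  then have W_bounded: "\<bar>W xs\<bar> \<le> B" for xs using mean[of xs] unfolding W_def by linarith
  have W_sq: "\<bar>W xs\<bar>\<^sup>2 \<le> B\<^sup>2" for xs using power_mono[OF W_bounded abs_ge_zero, of xs 2] .
  have [measurable]: "W \<in> borel_measurable ?P" unfolding W_def by measurable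
  have iW: "integrable ?P (\<lambda>xs. \<bar>W xs\<bar>)"
    using W_bounded by (intro P.integrable_const_bound[where B=B]) auto
  have iWW: "integrable ?P (\<lambda>xs. \<bar>W xs\<bar>\<^sup>2)"
    using W_sq by (intro P.integrable_const_bound[where B="B\<^sup>2"]) auto
  have "(\<integral>xs. \<bar>W xs\<bar> \<partial>?P)\<^sup>2 \<le> (\<integral>xs. (W xs)\<^sup>2 \<partial>?P)"
    using P.variance_positive[of "\<lambda>xs. \<bar>W xs\<bar>"] P.variance_eq[OF iW iWW] by simp
  also have "\<dots> = variance Y / real N"
    unfolding W_def by (rule integral_sample_mean_deviation_sq[OF N Y Y_bounded])
  also have "\<dots> \<le> B\<^sup>2 / real N"
  proof (rule divide_right_mono)
    have "variance Y \<le> expectation (\<lambda>x. (Y x)\<^sup>2)" using variance_eq[OF iY iYY] by simp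
    also have "\<dots> \<le> B\<^sup>2" using Y_sq iYY by (intro integral_le_const) auto
    finally show "variance Y \<le> B\<^sup>2" .
  qed simp
  finally have "(\<integral>xs. \<bar>W xs\<bar> \<partial>?P) \<le> sqrt (B\<^sup>2 / real N)"
    by (rule real_le_rsqrt)
  then show ?thesis
    using B iW by (simp add: nn_integral_eq_integral ennreal_leI W_def real_sqrt_divide)
qed

end

section \<open>Reweighting by a likelihood\<close>

definition reweight :: "'a measure \<Rightarrow> ('a \<Rightarrow> real) \<Rightarrow> ('a \<Rightarrow> real) \<Rightarrow> 'a \<Rightarrow> real" where
  "reweight M g u x = g x * u x / (\<integral>z. g z * u z \<partial>M)"

lemma measurable_reweight:
  assumes "sigma_finite_measure M" and [measurable]: "g \<in> borel_measurable M"
    and [measurable]: "(\<lambda>p. u (fst p) (snd p)) \<in> borel_measurable (R \<Otimes>\<^sub>M M)"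
  shows "(\<lambda>p. reweight M g (u (fst p)) (snd p)) \<in> borel_measurable (R \<Otimes>\<^sub>M M)"
proof -
  have "(\<lambda>(w, z). g z * u w z) \<in> borel_measurable (R \<Otimes>\<^sub>M M)"
    by (simp add: case_prod_beta') measurable
  then have [measurable]: "(\<lambda>w. \<integral>z. g z * u w z \<partial>M) \<in> borel_measurable R"
    by (rule sigma_finite_measure.borel_measurable_lebesgue_integral[OF assms(1)])
  show ?thesis unfolding reweight_def by measurable
qed

locale bounded_likelihood =
  fixes M :: "'a measure" and g :: "'a \<Rightarrow> real" and c :: real
  assumes likelihood_measurable[measurable]: "g \<in> borel_measurable M"
    and likelihood_pos: "\<And>x. 0 < g x"
    and likelihood_le: "\<And>x. g x \<le> c"
begin

lemma integrable_likelihood_mult: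
  assumes "integrable M u"
  shows "integrable M (\<lambda>x. g x * u x)"
proof (rule Bochner_Integration.integrable_bound)
  show "integrable M (\<lambda>x. c * u x)" using assms by simp
  show "AE x in M. norm (g x * u x) \<le> norm (c * u x)"
    using likelihood_pos likelihood_le
    by (intro AE_I2) (simp add: abs_mult mult_right_mono order.strict_implies_order
        order_trans[OF _ abs_ge_self])
qed (use assms in simp)

lemma integral_likelihood_mult_pos:
  assumes u: "prob_density M u"
  shows "0 < (\<integral>x. g x * u x \<partial>M)"
proof -
  have nonneg: "0 \<le> g x * u x" for x
    using likelihood_pos[of x] prob_density_nonneg[OF u] by simp
  have "(\<integral>x. g x * u x \<partial>M) \<noteq> 0"
  proof
    assume "(\<integral>x. g x * u x \<partial>M) = 0"
    then have "AE x in M. g x * u x = 0"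
      using integrable_likelihood_mult[OF prob_density_integrable[OF u]] nonneg
      by (simp add: integral_nonneg_eq_0_iff_AE)
    then have "AE x in M. ennreal (u x) = 0"
      by eventually_elim (use likelihood_pos in \<open>simp add: order_less_imp_not_eq2\<close>)
    then have "(\<integral>\<^sup>+x. ennreal (u x) \<partial>M) = 0" by (simp add: nn_integral_cong_AE)
    then show False using prob_density_nn_integral[OF u] by simp
  qed
  moreover have "0 \<le> (\<integral>x. g x * u x \<partial>M)" using nonneg by simp
  ultimately show ?thesis by simp
qed

lemma prob_density_reweight:
  assumes u: "prob_density M u"
  shows "prob_density M (reweight M g u)"
proof -
  define Z where "Z = (\<integral>x. g x * u x \<partial>M)"
  have Z: "0 < Z" unfolding Z_def by (rule integral_likelihood_mult_pos[OF u])
  have [measurable]: "u \<in> borel_measurable M" by (rule prob_density_measurable[OF u])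
  have nonneg: "0 \<le> reweight M g u x" for x
    using Z likelihood_pos[of x] prob_density_nonneg[OF u] by (simp add: reweight_def Z_def[symmetric])
  have "(\<integral>\<^sup>+x. ennreal (reweight M g u x) \<partial>M) = ennreal (\<integral>x. reweight M g u x \<partial>M)"
    using nonneg integrable_likelihood_mult[OF prob_density_integrable[OF u]]
    by (intro nn_integral_eq_integral) (auto simp: reweight_def)
  also have "(\<integral>x. reweight M g u x \<partial>M) = 1"
    using Z by (simp add: reweight_def Z_def[symmetric])
  moreover have "reweight M g u \<in> borel_measurable M"
    unfolding reweight_def[abs_def] by measurable
  ultimately show ?thesis
    using nonneg by (simp add: prob_density_def)
qed

lemma abs_integral_likelihood_mult_diff_le:
  assumes "integrable M u" "integrable M v"
  shows "\<bar>(\<integral>x. g x * u x \<partial>M) - (\<integral>x. g x * v x \<partial>M)\<bar> \<le> (\<integral>x. g x * \<bar>u x - v x\<bar> \<partial>M)"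
proof -
  have "\<bar>(\<integral>x. g x * u x \<partial>M) - (\<integral>x. g x * v x \<partial>M)\<bar> = \<bar>\<integral>x. g x * (u x - v x) \<partial>M\<bar>"
    using assms by (simp add: integrable_likelihood_mult right_diff_distrib)
  also have "\<dots> \<le> (\<integral>x. \<bar>g x * (u x - v x)\<bar> \<partial>M)" by (rule integral_abs_bound)
  also have "\<dots> = (\<integral>x. g x * \<bar>u x - v x\<bar> \<partial>M)"
    using likelihood_pos by (intro Bochner_Integration.integral_cong) (auto simp: abs_mult less_imp_le)
  finally show ?thesis .
qed

lemma integral_abs_reweight_diff_le:
  assumes u: "prob_density M u" and v: "prob_density M v"
  shows "(\<integral>x. \<bar>reweight M g u x - reweight M g v x\<bar> \<partial>M)
    \<le> 2 * (\<integral>x. g x * \<bar>u x - v x\<bar> \<partial>M) / (\<integral>x. g x * v x \<partial>M)"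
proof -
  define Zu where "Zu = (\<integral>x. g x * u x \<partial>M)"
  define Zv where "Zv = (\<integral>x. g x * v x \<partial>M)"
  define G where "G = (\<integral>x. g x * \<bar>u x - v x\<bar> \<partial>M)"
  have Zu: "0 < Zu" and Zv: "0 < Zv"
    unfolding Zu_def Zv_def by (intro integral_likelihood_mult_pos u v)+
  have iu: "integrable M u" and iv: "integrable M v"
    using u v by (auto intro: prob_density_integrable)
  have igu: "integrable M (\<lambda>x. g x * u x)" and igv: "integrable M (\<lambda>x. g x * v x)"
    and igd: "integrable M (\<lambda>x. g x * \<bar>u x - v x\<bar>)"
    using iu iv by (auto intro!: integrable_likelihood_mult)
  have pointwise: "\<bar>reweight M g u x - reweight M g v x\<bar>
      \<le> g x * \<bar>u x - v x\<bar> / Zv + g x * u x * \<bar>1 / Zu - 1 / Zv\<bar>" for x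
  proof -
    have "reweight M g u x - reweight M g v x = g x * (u x - v x) / Zv + g x * u x * (1 / Zu - 1 / Zv)"
      using Zu Zv by (simp add: reweight_def Zu_def[symmetric] Zv_def[symmetric] field_simps)
    also have "\<bar>\<dots>\<bar> \<le> \<bar>g x * (u x - v x) / Zv\<bar> + \<bar>g x * u x * (1 / Zu - 1 / Zv)\<bar>"
      by (rule abs_triangle_ineq)
    also have "\<dots> = g x * \<bar>u x - v x\<bar> / Zv + g x * u x * \<bar>1 / Zu - 1 / Zv\<bar>"
      using likelihood_pos[of x] prob_density_nonneg[OF u, of x] Zv by (simp add: abs_mult)
    finally show ?thesis .
  qed
  have "(\<integral>x. \<bar>reweight M g u x - reweight M g v x\<bar> \<partial>M)
      \<le> (\<integral>x. g x * \<bar>u x - v x\<bar> / Zv + g x * u x * \<bar>1 / Zu - 1 / Zv\<bar> \<partial>M)"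
    using igu igv igd pointwise
    by (intro integral_mono) (auto simp: reweight_def[abs_def] Zu_def[symmetric] Zv_def[symmetric])
  also have "\<dots> = G / Zv + Zu * \<bar>1 / Zu - 1 / Zv\<bar>"
    using igd igu by (simp add: G_def Zu_def)
  also have "Zu * \<bar>1 / Zu - 1 / Zv\<bar> = \<bar>Zu - Zv\<bar> / Zv"
  proof -
    have "1 / Zu - 1 / Zv = (Zv - Zu) / (Zu * Zv)" using Zu Zv by (simp add: field_simps)
    then show ?thesis using Zu Zv by (simp add: abs_divide abs_mult abs_minus_commute)
  qed
  also have "\<bar>Zu - Zv\<bar> \<le> G"
    unfolding Zu_def Zv_def G_def by (rule abs_integral_likelihood_mult_diff_le[OF iu iv])
  finally show ?thesis
    using Zv by (simp add: G_def Zv_def divide_right_mono)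
qed

lemma L1_dist_reweight_le:
  assumes u: "prob_density M u" and v: "prob_density M v"
  shows "L1_dist M (reweight M g u) (reweight M g v)
    \<le> ennreal (2 * c / (\<integral>x. g x * v x \<partial>M)) * L1_dist M u v"
proof -
  define Zv where "Zv = (\<integral>x. g x * v x \<partial>M)"
  have Zv: "0 < Zv" unfolding Zv_def by (rule integral_likelihood_mult_pos[OF v])
  have iu: "integrable M u" and iv: "integrable M v"
    using u v by (auto intro: prob_density_integrable)
  have "(\<integral>x. g x * \<bar>u x - v x\<bar> \<partial>M) \<le> (\<integral>x. c * \<bar>u x - v x\<bar> \<partial>M)"
    using iu iv likelihood_le
    by (intro integral_mono integrable_likelihood_mult) (auto intro: mult_right_mono)
  then have "(\<integral>x. \<bar>reweight M g u x - reweight M g v x\<bar> \<partial>M) \<le> 2 * c / Zv * (\<integral>x. \<bar>u x - v x\<bar> \<partial>M)"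
    using integral_abs_reweight_diff_le[OF u v] Zv
    by (simp add: Zv_def[symmetric] divide_right_mono order_trans)
  then have "L1_dist M (reweight M g u) (reweight M g v) \<le> ennreal (2 * c / Zv * (\<integral>x. \<bar>u x - v x\<bar> \<partial>M))"
    using prob_density_reweight u v
    by (simp add: L1_dist_eq_integral prob_density_integrable ennreal_leI)
  also have "\<dots> = ennreal (2 * c / Zv) * L1_dist M u v"
  proof -
    have "0 \<le> 2 * c / Zv"
      using Zv likelihood_pos[of undefined] likelihood_le[of undefined] by simp
    then show ?thesis by (subst L1_dist_eq_integral[OF iu iv]) (rule ennreal_mult')
  qed
  finally show ?thesis unfolding Zv_def .
qed

end

section \<open>Markov kernels given by densities\<close>

definition predict :: "'a measure \<Rightarrow> ('a \<Rightarrow> 'a \<Rightarrow> real) \<Rightarrow> ('a \<Rightarrow> real) \<Rightarrow> 'a \<Rightarrow> real" where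
  "predict M k q z = (\<integral>x. q x * k x z \<partial>M)"

definition kernel_average :: "('a \<Rightarrow> 'a \<Rightarrow> real) \<Rightarrow> nat \<Rightarrow> (nat \<Rightarrow> 'a) \<Rightarrow> 'a \<Rightarrow> real" where
  "kernel_average k N xs z = (\<Sum>j<N. k (xs j) z) / real N"

locale density_kernel = sigma_finite_measure \<mu> for \<mu> :: "'a measure" +
  fixes k :: "'a \<Rightarrow> 'a \<Rightarrow> real"
  assumes kernel_measurable: "(\<lambda>(x, z). k x z) \<in> borel_measurable (\<mu> \<Otimes>\<^sub>M \<mu>)"
    and kernel_nonneg: "\<And>x z. 0 \<le> k x z"
    and kernel_nn_integral: "\<And>x. (\<integral>\<^sup>+z. ennreal (k x z) \<partial>\<mu>) = 1"
    and space_eq_UNIV[simp]: "space \<mu> = UNIV" \<comment> \<open>makes every section \<open>k x\<close> measurable\<close>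
begin

sublocale pair: pair_sigma_finite \<mu> \<mu> ..

lemma measurable_kernel[measurable (raw)]:
  assumes "f \<in> measurable N \<mu>" "g \<in> measurable N \<mu>"
  shows "(\<lambda>w. k (f w) (g w)) \<in> borel_measurable N"
  using measurable_compose[OF measurable_Pair[OF assms] kernel_measurable] by simp

lemma nn_integral_kernel_mass:
  assumes [measurable]: "q \<in> borel_measurable \<mu>" and q_nonneg: "\<And>x. 0 \<le> q x"
  shows "(\<integral>\<^sup>+z. \<integral>\<^sup>+x. ennreal (q x * k x z) \<partial>\<mu> \<partial>\<mu>) = (\<integral>\<^sup>+x. ennreal (q x) \<partial>\<mu>)"
proof -
  have "(\<integral>\<^sup>+z. \<integral>\<^sup>+x. ennreal (q x * k x z) \<partial>\<mu> \<partial>\<mu>) = (\<integral>\<^sup>+x. \<integral>\<^sup>+z. ennreal (q x * k x z) \<partial>\<mu> \<partial>\<mu>)"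
    by (rule pair.Fubini') measurable
  also have "\<dots> = (\<integral>\<^sup>+x. ennreal (q x) * (\<integral>\<^sup>+z. ennreal (k x z) \<partial>\<mu>) \<partial>\<mu>)"
    using q_nonneg by (intro nn_integral_cong) (simp add: ennreal_mult' nn_integral_cmult)
  finally show ?thesis by (simp add: kernel_nn_integral)
qed

lemma predict_measurable:
  assumes [measurable]: "q \<in> borel_measurable \<mu>"
  shows "predict \<mu> k q \<in> borel_measurable \<mu>"
proof -
  have "(\<lambda>(z, x). q x * k x z) \<in> borel_measurable (\<mu> \<Otimes>\<^sub>M \<mu>)" by measurable
  then show ?thesis unfolding predict_def[abs_def] by (rule borel_measurable_lebesgue_integral)
qed

lemma AE_integrable_kernel_section:
  assumes q: "prob_density \<mu> q"
  shows "AE z in \<mu>. integrable \<mu> (\<lambda>x. q x * k x z)"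
proof -
  have [measurable]: "q \<in> borel_measurable \<mu>" by (rule prob_density_measurable[OF q])
  have "(\<lambda>(z, x). ennreal (q x * k x z)) \<in> borel_measurable (\<mu> \<Otimes>\<^sub>M \<mu>)" by measurable
  then have "(\<lambda>z. \<integral>\<^sup>+x. ennreal (q x * k x z) \<partial>\<mu>) \<in> borel_measurable \<mu>"
    by (rule borel_measurable_nn_integral)
  moreover have "(\<integral>\<^sup>+z. \<integral>\<^sup>+x. ennreal (q x * k x z) \<partial>\<mu> \<partial>\<mu>) = 1"
    using q by (simp add: nn_integral_kernel_mass prob_density_def)
  ultimately have "AE z in \<mu>. (\<integral>\<^sup>+x. ennreal (q x * k x z) \<partial>\<mu>) \<noteq> \<infinity>"
    by (intro nn_integral_PInf_AE) auto
  then show ?thesis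
  proof eventually_elim
    case (elim z)
    then show ?case
      using prob_density_nonneg[OF q] kernel_nonneg
      by (intro integrableI_nonneg) (auto simp: top.not_eq_extremum)
  qed
qed

lemma AE_ennreal_predict:
  assumes q: "prob_density \<mu> q"
  shows "AE z in \<mu>. ennreal (predict \<mu> k q z) = (\<integral>\<^sup>+x. ennreal (q x * k x z) \<partial>\<mu>)"
  using AE_integrable_kernel_section[OF q]
proof eventually_elim
  case (elim z)
  then show ?case
    using prob_density_nonneg[OF q] kernel_nonneg
    unfolding predict_def by (intro nn_integral_eq_integral[symmetric]) auto
qed

lemma prob_density_predict:
  assumes q: "prob_density \<mu> q"
  shows "prob_density \<mu> (predict \<mu> k q)"
proof -
  have "(\<integral>\<^sup>+z. ennreal (predict \<mu> k q z) \<partial>\<mu>) = (\<integral>\<^sup>+z. \<integral>\<^sup>+x. ennreal (q x * k x z) \<partial>\<mu> \<partial>\<mu>)"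
    by (rule nn_integral_cong_AE[OF AE_ennreal_predict[OF q]])
  also have "\<dots> = 1"
    using q by (simp add: nn_integral_kernel_mass prob_density_def)
  moreover have "predict \<mu> k q \<in> borel_measurable \<mu>"
    by (rule predict_measurable[OF prob_density_measurable[OF q]])
  ultimately show ?thesis
    using prob_density_nonneg[OF q] kernel_nonneg
    by (auto simp: prob_density_def predict_def)
qed

lemma L1_dist_predict_le:
  assumes q: "prob_density \<mu> q" and h: "prob_density \<mu> h"
  shows "L1_dist \<mu> (predict \<mu> k q) (predict \<mu> k h) \<le> L1_dist \<mu> q h"
proof -
  have [measurable]: "q \<in> borel_measurable \<mu>" "h \<in> borel_measurable \<mu>"
    using q h by (auto dest: prob_density_measurable)
  have "AE z in \<mu>. ennreal \<bar>predict \<mu> k q z - predict \<mu> k h z\<bar>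
      \<le> (\<integral>\<^sup>+x. ennreal (\<bar>q x - h x\<bar> * k x z) \<partial>\<mu>)"
    using AE_integrable_kernel_section[OF q] AE_integrable_kernel_section[OF h]
  proof eventually_elim
    case (elim z)
    have "\<bar>predict \<mu> k q z - predict \<mu> k h z\<bar> = \<bar>\<integral>x. (q x - h x) * k x z \<partial>\<mu>\<bar>"
      using elim by (simp add: predict_def left_diff_distrib)
    also have "\<dots> \<le> (\<integral>x. \<bar>q x - h x\<bar> * k x z \<partial>\<mu>)"
      using integral_abs_bound[of \<mu> "\<lambda>x. (q x - h x) * k x z"] kernel_nonneg
      by (simp add: abs_mult)
    moreover have "integrable \<mu> (\<lambda>x. \<bar>q x - h x\<bar> * k x z)"
    proof -
      have "integrable \<mu> (\<lambda>x. \<bar>q x * k x z - h x * k x z\<bar>)" using elim by auto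
      then show ?thesis using kernel_nonneg by (simp add: abs_mult left_diff_distrib[symmetric])
    qed
    ultimately show ?case
      using kernel_nonneg by (subst nn_integral_eq_integral) (auto intro!: ennreal_leI)
  qed
  then have "L1_dist \<mu> (predict \<mu> k q) (predict \<mu> k h)
      \<le> (\<integral>\<^sup>+z. \<integral>\<^sup>+x. ennreal (\<bar>q x - h x\<bar> * k x z) \<partial>\<mu> \<partial>\<mu>)"
    unfolding L1_dist_def by (rule nn_integral_mono_AE)
  also have "\<dots> = L1_dist \<mu> q h"
    unfolding L1_dist_def by (rule nn_integral_kernel_mass) auto
  finally show ?thesis .
qed

lemma prob_density_kernel_average:
  assumes N: "1 \<le> N"
  shows "prob_density \<mu> (kernel_average k N xs)"
proof -
  have "(\<integral>\<^sup>+z. ennreal (kernel_average k N xs z) \<partial>\<mu>)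
      = (\<integral>\<^sup>+z. (\<Sum>j<N. ennreal (k (xs j) z)) * ennreal (1 / real N) \<partial>\<mu>)"
    unfolding kernel_average_def using kernel_nonneg
    by (intro nn_integral_cong) (simp add: sum_nonneg divide_inverse flip: ennreal_mult)
  also have "\<dots> = (\<Sum>j<N. \<integral>\<^sup>+z. ennreal (k (xs j) z) \<partial>\<mu>) * ennreal (1 / real N)"
  proof -
    have [measurable]: "(\<lambda>z. ennreal (k (xs j) z)) \<in> borel_measurable \<mu>" for j by measurable
    show ?thesis by (simp add: nn_integral_multc nn_integral_sum)
  qed
  also have "\<dots> = 1"
    using N by (simp add: kernel_nn_integral ennreal_of_nat_eq_real_of_nat flip: ennreal_mult)
  finally show ?thesis
    using kernel_nonneg
    by (auto simp: prob_density_def kernel_average_def[abs_def] intro!: sum_nonneg divide_nonneg_nonneg)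
qed

lemma measurable_kernel_average:
  assumes R: "sets R = sets (PiM {..<N} (\<lambda>_. \<mu>))"
  shows "(\<lambda>p. kernel_average k N (fst p) (snd p)) \<in> borel_measurable (R \<Otimes>\<^sub>M \<mu>)"
proof -
  have [measurable]: "(\<lambda>w. w j) \<in> measurable R \<mu>" if "j < N" for j
    unfolding measurable_cong_sets[OF R refl] using that by (intro measurable_component_singleton) simp
  show ?thesis unfolding kernel_average_def by measurable
qed

subsection \<open>A uniform law of large numbers for kernel averages\<close>

lemma ennreal_abs_integral_truncated_sub_predict_le:
  assumes q: "prob_density \<mu> q"
    and Y[measurable]: "Y \<in> borel_measurable \<mu>" and Y_nonneg: "\<And>x. 0 \<le> Y x"
    and Y_le_kernel: "\<And>x. Y x \<le> k x z" and Y_le: "\<And>x. Y x \<le> B"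
  shows "ennreal \<bar>(\<integral>x. q x * Y x \<partial>\<mu>) - predict \<mu> k q z\<bar>
    \<le> (\<integral>\<^sup>+x. ennreal (q x * (k x z - Y x)) \<partial>\<mu>)"
proof (cases "(\<integral>\<^sup>+x. ennreal (q x * (k x z - Y x)) \<partial>\<mu>) = \<infinity>")
  case False
  have [measurable]: "q \<in> borel_measurable \<mu>" by (rule prob_density_measurable[OF q])
  have q_nonneg: "0 \<le> q x" for x by (rule prob_density_nonneg[OF q])
  have int_tail: "integrable \<mu> (\<lambda>x. q x * (k x z - Y x))"
    using False Y_le_kernel q_nonneg by (intro integrableI_nonneg) (auto simp: top.not_eq_extremum)
  have int_Y: "integrable \<mu> (\<lambda>x. q x * Y x)"
  proof (rule Bochner_Integration.integrable_bound)
    show "integrable \<mu> (\<lambda>x. B * q x)" using prob_density_integrable[OF q] by simp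
    show "AE x in \<mu>. norm (q x * Y x) \<le> norm (B * q x)"
    proof (intro AE_I2)
      fix x
      have "Y x * q x \<le> \<bar>B\<bar> * q x"
        using Y_le[of x] q_nonneg[of x]
        by (intro mult_right_mono) (auto intro: order_trans[OF _ abs_ge_self])
      then show "norm (q x * Y x) \<le> norm (B * q x)"
        using q_nonneg[of x] Y_nonneg[of x] by (simp add: abs_mult mult.commute)
    qed
  qed simp
  have "integrable \<mu> (\<lambda>x. q x * k x z)"
    using Bochner_Integration.integrable_add[OF int_tail int_Y] by (simp add: algebra_simps)
  then have "predict \<mu> k q z - (\<integral>x. q x * Y x \<partial>\<mu>) = (\<integral>x. q x * (k x z - Y x) \<partial>\<mu>)"
    unfolding predict_def using int_Y by (simp add: right_diff_distrib)
  moreover have "0 \<le> (\<integral>x. q x * (k x z - Y x) \<partial>\<mu>)"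
    using q_nonneg Y_le_kernel by simp
  ultimately have "\<bar>(\<integral>x. q x * Y x \<partial>\<mu>) - predict \<mu> k q z\<bar> = (\<integral>x. q x * (k x z - Y x) \<partial>\<mu>)"
    by (metis abs_minus_commute abs_of_nonneg)
  then show ?thesis
    using int_tail q_nonneg Y_le_kernel by (subst nn_integral_eq_integral) auto
qed simp

lemma nn_integral_abs_kernel_average_sub_predict_le:
  assumes q: "prob_density \<mu> q" and N: "1 \<le> N"
    and Y[measurable]: "Y \<in> borel_measurable \<mu>" and Y_nonneg: "\<And>x. 0 \<le> Y x"
    and Y_le_kernel: "\<And>x. Y x \<le> k x z" and Y_le: "\<And>x. Y x \<le> B"
  shows "(\<integral>\<^sup>+xs. ennreal \<bar>kernel_average k N xs z - predict \<mu> k q z\<bar>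
      \<partial>PiM {..<N} (\<lambda>_. density \<mu> (\<lambda>x. ennreal (q x))))
    \<le> ennreal (B / sqrt N) + 2 * (\<integral>\<^sup>+x. ennreal (q x * (k x z - Y x)) \<partial>\<mu>)"
proof -
  let ?P = "density \<mu> (\<lambda>x. ennreal (q x))"
  let ?PQ = "PiM {..<N} (\<lambda>_. ?P)"
  interpret P: prob_space ?P by (rule prob_space_density_prob_density[OF q])
  interpret PQ: prob_space ?PQ by (rule prob_space_PiM_density[OF q])
  have [measurable]: "q \<in> borel_measurable \<mu>" by (rule prob_density_measurable[OF q])
  have q_nonneg: "0 \<le> q x" for x by (rule prob_density_nonneg[OF q])
  define m where "m = P.expectation Y"
  define R where "R = (\<integral>\<^sup>+x. ennreal (q x * (k x z - Y x)) \<partial>\<mu>)"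
  define W where "W xs = (\<Sum>j<N. Y (xs j)) / real N - m" for xs
  define E where "E xs = (\<Sum>j<N. k (xs j) z - Y (xs j)) / real N" for xs
  have [measurable]: "W \<in> borel_measurable ?PQ" "E \<in> borel_measurable ?PQ"
    unfolding W_def E_def by measurable
  have W_bound: "(\<integral>\<^sup>+xs. ennreal \<bar>W xs\<bar> \<partial>?PQ) \<le> ennreal (B / sqrt N)"
    unfolding W_def m_def using Y_nonneg Y_le
    by (intro P.nn_integral_abs_sample_mean_deviation_le N) auto
  have "(\<integral>\<^sup>+xs. ennreal (E xs) \<partial>?PQ) = (\<integral>\<^sup>+x. ennreal (k x z - Y x) \<partial>?P)"
    unfolding E_def using Y_le_kernel by (intro P.nn_integral_sample_mean N) auto
  then have E_mass: "(\<integral>\<^sup>+xs. ennreal (E xs) \<partial>?PQ) = R"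
    unfolding R_def using q_nonneg by (simp add: nn_integral_density ennreal_mult')
  have "m = (\<integral>x. q x * Y x \<partial>\<mu>)"
    unfolding m_def using q_nonneg by (subst integral_density) auto
  then have bias: "ennreal \<bar>m - predict \<mu> k q z\<bar> \<le> R"
    unfolding R_def using ennreal_abs_integral_truncated_sub_predict_le[OF q Y Y_nonneg Y_le_kernel Y_le]
    by simp
  have "ennreal \<bar>kernel_average k N xs z - predict \<mu> k q z\<bar>
      \<le> ennreal \<bar>W xs\<bar> + ennreal (E xs) + ennreal \<bar>m - predict \<mu> k q z\<bar>" for xs
  proof -
    have "kernel_average k N xs z - predict \<mu> k q z = W xs + E xs + (m - predict \<mu> k q z)"
      unfolding W_def E_def kernel_average_def by (simp add: sum_subtractf diff_divide_distrib)
    moreover have "0 \<le> E xs"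
      unfolding E_def using Y_le_kernel by (simp add: sum_nonneg)
    ultimately show ?thesis by (simp add: ennreal_plus[symmetric] del: ennreal_plus)
  qed
  then have "(\<integral>\<^sup>+xs. ennreal \<bar>kernel_average k N xs z - predict \<mu> k q z\<bar> \<partial>?PQ)
      \<le> (\<integral>\<^sup>+xs. ennreal \<bar>W xs\<bar> + ennreal (E xs) + ennreal \<bar>m - predict \<mu> k q z\<bar> \<partial>?PQ)"
    by (rule nn_integral_mono)
  also have "\<dots> = (\<integral>\<^sup>+xs. ennreal \<bar>W xs\<bar> \<partial>?PQ) + (\<integral>\<^sup>+xs. ennreal (E xs) \<partial>?PQ)
      + ennreal \<bar>m - predict \<mu> k q z\<bar>"
    by (simp add: nn_integral_add PQ.emeasure_space_1)
  also have "\<dots> \<le> ennreal (B / sqrt N) + R + R"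
    unfolding E_mass by (intro add_mono W_bound bias order_refl)
  finally show ?thesis
    unfolding R_def[symmetric] by (simp add: mult_2 add.assoc)
qed

text \<open>
  k x z = min (k x z) M * indicator S z + kernel_tail M S x z: the bounded part is controlled
  by the variance of a sample mean, the tail by its mass, which is small uniformly for
  densities L1-close to a fixed one.
\<close>

definition kernel_tail :: "real \<Rightarrow> 'a set \<Rightarrow> 'a \<Rightarrow> 'a \<Rightarrow> real" where
  "kernel_tail M S x z = k x z - min (k x z) M * indicator S z"

definition tail_mass :: "real \<Rightarrow> 'a set \<Rightarrow> ('a \<Rightarrow> real) \<Rightarrow> ennreal" where
  "tail_mass M S q = (\<integral>\<^sup>+z. \<integral>\<^sup>+x. ennreal (q x * kernel_tail M S x z) \<partial>\<mu> \<partial>\<mu>)"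

lemma measurable_kernel_tail[measurable (raw)]:
  assumes "S \<in> sets \<mu>" "f \<in> measurable N \<mu>" "g \<in> measurable N \<mu>"
  shows "(\<lambda>w. kernel_tail M S (f w) (g w)) \<in> borel_measurable N"
  unfolding kernel_tail_def using assms by measurable

lemma tail_mass_eq:
  assumes [measurable]: "q \<in> borel_measurable \<mu>" "S \<in> sets \<mu>"
    and q_nonneg: "\<And>x. 0 \<le> q x"
  shows "tail_mass M S q = (\<integral>\<^sup>+x. ennreal (q x) * (\<integral>\<^sup>+z. ennreal (kernel_tail M S x z) \<partial>\<mu>) \<partial>\<mu>)"
proof -
  have "tail_mass M S q = (\<integral>\<^sup>+x. \<integral>\<^sup>+z. ennreal (q x * kernel_tail M S x z) \<partial>\<mu> \<partial>\<mu>)"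
    unfolding tail_mass_def by (rule pair.Fubini') measurable
  also have "\<dots> = (\<integral>\<^sup>+x. ennreal (q x) * (\<integral>\<^sup>+z. ennreal (kernel_tail M S x z) \<partial>\<mu>) \<partial>\<mu>)"
    using q_nonneg by (intro nn_integral_cong) (simp add: ennreal_mult' nn_integral_cmult)
  finally show ?thesis .
qed

lemma nn_integral_kernel_tail_le: "0 \<le> M \<Longrightarrow> (\<integral>\<^sup>+z. ennreal (kernel_tail M S x z) \<partial>\<mu>) \<le> 1"
  using nn_integral_mono[of \<mu> "\<lambda>z. ennreal (kernel_tail M S x z)" "\<lambda>z. ennreal (k x z)"]
  by (simp add: kernel_nn_integral kernel_tail_def kernel_nonneg)

lemma tail_mass_le:
  assumes q: "prob_density \<mu> q" and h: "prob_density \<mu> h" and M: "0 \<le> M" and S: "S \<in> sets \<mu>"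
  shows "tail_mass M S q \<le> tail_mass M S h + L1_dist \<mu> q h"
proof -
  define T where "T x = (\<integral>\<^sup>+z. ennreal (kernel_tail M S x z) \<partial>\<mu>)" for x
  have [measurable]: "q \<in> borel_measurable \<mu>" "h \<in> borel_measurable \<mu>" "S \<in> sets \<mu>"
    using q h S by (auto dest: prob_density_measurable)
  have [measurable]: "T \<in> borel_measurable \<mu>"
  proof -
    have "(\<lambda>(x, z). ennreal (kernel_tail M S x z)) \<in> borel_measurable (\<mu> \<Otimes>\<^sub>M \<mu>)" by measurable
    then show ?thesis unfolding T_def by (rule borel_measurable_nn_integral)
  qed
  have "ennreal (q x) * T x \<le> ennreal (h x) * T x + ennreal \<bar>q x - h x\<bar>" for x
  proof -
    have "ennreal (q x) \<le> ennreal (h x) + ennreal \<bar>q x - h x\<bar>"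
      using prob_density_nonneg[OF h, of x] by (simp add: ennreal_plus[symmetric] del: ennreal_plus)
    then have "ennreal (q x) * T x \<le> ennreal (h x) * T x + ennreal \<bar>q x - h x\<bar> * T x"
      by (metis distrib_right mult_right_mono zero_le)
    also have "ennreal \<bar>q x - h x\<bar> * T x \<le> ennreal \<bar>q x - h x\<bar>"
      using nn_integral_kernel_tail_le[OF M] mult_left_mono[of "T x" 1] by (simp add: T_def)
    finally show ?thesis by (simp add: add_left_mono)
  qed
  then have "(\<integral>\<^sup>+x. ennreal (q x) * T x \<partial>\<mu>) \<le> (\<integral>\<^sup>+x. ennreal (h x) * T x + ennreal \<bar>q x - h x\<bar> \<partial>\<mu>)"
    by (rule nn_integral_mono)
  also have "\<dots> = (\<integral>\<^sup>+x. ennreal (h x) * T x \<partial>\<mu>) + L1_dist \<mu> q h"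
    unfolding L1_dist_def by (rule nn_integral_add) auto
  finally show ?thesis
    using q h M S by (simp add: tail_mass_eq T_def prob_density_nonneg)
qed

lemma tail_mass_small:
  assumes h: "prob_density \<mu> h" and e: "0 < e"
  shows "\<exists>M\<ge>0. \<exists>S\<in>sets \<mu>. emeasure \<mu> S < \<infinity> \<and> tail_mass M S h < ennreal e"
proof -
  obtain A :: "nat \<Rightarrow> 'a set" where A: "range A \<subseteq> sets \<mu>" "(\<Union>i. A i) = space \<mu>"
    "\<And>i. emeasure \<mu> (A i) \<noteq> \<infinity>" "incseq A"
    by (rule sigma_finite_incseq) blast
  have [measurable]: "h \<in> borel_measurable \<mu>" "\<And>n. A n \<in> sets \<mu>"
    using h A(1) by (auto dest: prob_density_measurable)
  define f where "f n p = ennreal (h (fst p) * kernel_tail (real n) (A n) (fst p) (snd p))" for n p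
  have f_measurable[measurable]: "f n \<in> borel_measurable (\<mu> \<Otimes>\<^sub>M \<mu>)" for n
    unfolding f_def by measurable
  have tail_mass_f: "tail_mass (real n) (A n) h = (\<integral>\<^sup>+p. f n p \<partial>(\<mu> \<Otimes>\<^sub>M \<mu>))" for n
    by (subst pair.nn_integral_snd[OF f_measurable, symmetric]) (simp add: f_def tail_mass_def)
  have "decseq f"
  proof (intro decseq_SucI le_funI)
    fix n p
    have "A n \<subseteq> A (Suc n)" using A(4) by (simp add: incseq_Suc_iff)
    then have "kernel_tail (real (Suc n)) (A (Suc n)) (fst p) (snd p)
        \<le> kernel_tail (real n) (A n) (fst p) (snd p)"
      using kernel_nonneg[of "fst p" "snd p"] by (auto simp: kernel_tail_def indicator_def)
    then show "f (Suc n) p \<le> f n p"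
      unfolding f_def using prob_density_nonneg[OF h] by (intro ennreal_leI mult_left_mono) auto
  qed
  moreover have "(\<integral>\<^sup>+p. f 0 p \<partial>(\<mu> \<Otimes>\<^sub>M \<mu>)) < \<infinity>"
  proof -
    have "(\<integral>\<^sup>+p. f 0 p \<partial>(\<mu> \<Otimes>\<^sub>M \<mu>))
        = (\<integral>\<^sup>+x. ennreal (h x) * (\<integral>\<^sup>+z. ennreal (kernel_tail 0 (A 0) x z) \<partial>\<mu>) \<partial>\<mu>)"
      using tail_mass_f[of 0] tail_mass_eq[of h "A 0"] prob_density_nonneg[OF h] by simp
    also have "\<dots> \<le> (\<integral>\<^sup>+x. ennreal (h x) * 1 \<partial>\<mu>)"
      by (intro nn_integral_mono mult_left_mono nn_integral_kernel_tail_le) auto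
    finally have "(\<integral>\<^sup>+p. f 0 p \<partial>(\<mu> \<Otimes>\<^sub>M \<mu>)) \<le> (\<integral>\<^sup>+x. ennreal (h x) \<partial>\<mu>)" by simp
    then show ?thesis
      using prob_density_nn_integral[OF h] by (simp add: top.not_eq_extremum le_less_trans)
  qed
  ultimately have "(\<integral>\<^sup>+p. (INF n. f n p) \<partial>(\<mu> \<Otimes>\<^sub>M \<mu>)) = (INF n. integral\<^sup>N (\<mu> \<Otimes>\<^sub>M \<mu>) (f n))"
    by (intro nn_integral_monotone_convergence_INF_decseq f_measurable)
  moreover have "(INF n. f n p) = 0" for p
  proof -
    obtain n0 where "snd p \<in> A n0" using A(2) by auto
    define n where "n = max n0 (nat \<lceil>k (fst p) (snd p)\<rceil>)"
    have "snd p \<in> A n" using \<open>snd p \<in> A n0\<close> A(4) monoD[of A n0 n] by (auto simp: n_def)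
    moreover have "k (fst p) (snd p) \<le> real n" unfolding n_def by linarith
    ultimately have "f n p = 0" by (simp add: f_def kernel_tail_def)
    then show ?thesis by (metis INF_lower UNIV_I le_zero_eq)
  qed
  ultimately have "(INF n. tail_mass (real n) (A n) h) < ennreal e"
    using e by (simp add: tail_mass_f)
  then obtain n where "tail_mass (real n) (A n) h < ennreal e" by (auto simp: INF_less_iff)
  then show ?thesis
    using A(3)[of n] by (intro exI[of _ "real n"] bexI[of _ "A n"]) (auto simp: top.not_eq_extremum)
qed

lemma nn_integral_L1_dist_kernel_average_le:
  assumes q: "prob_density \<mu> q" and N: "1 \<le> N" and M: "0 \<le> M" and S[measurable]: "S \<in> sets \<mu>"
  shows "(\<integral>\<^sup>+xs. L1_dist \<mu> (kernel_average k N xs) (predict \<mu> k q)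
      \<partial>PiM {..<N} (\<lambda>_. density \<mu> (\<lambda>x. ennreal (q x))))
    \<le> ennreal (M / sqrt N) * emeasure \<mu> S + 2 * tail_mass M S q"
proof -
  let ?PQ = "PiM {..<N} (\<lambda>_. density \<mu> (\<lambda>x. ennreal (q x)))"
  interpret PQ: prob_space ?PQ by (rule prob_space_PiM_density[OF q])
  interpret PQ_\<mu>: pair_sigma_finite ?PQ \<mu> ..
  have [measurable]: "q \<in> borel_measurable \<mu>" "predict \<mu> k q \<in> borel_measurable \<mu>"
    using q by (auto intro: predict_measurable dest: prob_density_measurable)
  have [measurable]: "(\<lambda>p. kernel_average k N (fst p) (snd p)) \<in> borel_measurable (?PQ \<Otimes>\<^sub>M \<mu>)"
    by (rule measurable_kernel_average[OF sets_PiM_density])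
  have "(\<integral>\<^sup>+xs. L1_dist \<mu> (kernel_average k N xs) (predict \<mu> k q) \<partial>?PQ)
      = (\<integral>\<^sup>+z. \<integral>\<^sup>+xs. ennreal \<bar>kernel_average k N xs z - predict \<mu> k q z\<bar> \<partial>?PQ \<partial>\<mu>)"
  proof -
    have "(\<lambda>(xs, z). ennreal \<bar>kernel_average k N xs z - predict \<mu> k q z\<bar>)
        \<in> borel_measurable (?PQ \<Otimes>\<^sub>M \<mu>)"
      by (simp add: case_prod_beta') measurable
    from PQ_\<mu>.Fubini'[OF this] show ?thesis unfolding L1_dist_def by simp
  qed
  also have "\<dots> \<le> (\<integral>\<^sup>+z. ennreal (M / sqrt N) * indicator S z
      + 2 * (\<integral>\<^sup>+x. ennreal (q x * kernel_tail M S x z) \<partial>\<mu>) \<partial>\<mu>)"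
  proof (rule nn_integral_mono)
    fix z
    have "(\<integral>\<^sup>+xs. ennreal \<bar>kernel_average k N xs z - predict \<mu> k q z\<bar> \<partial>?PQ)
        \<le> ennreal (M * indicator S z / sqrt N)
          + 2 * (\<integral>\<^sup>+x. ennreal (q x * (k x z - min (k x z) M * indicator S z)) \<partial>\<mu>)"
      using q N M kernel_nonneg
      by (intro nn_integral_abs_kernel_average_sub_predict_le) (auto simp: indicator_def)
    then show "(\<integral>\<^sup>+xs. ennreal \<bar>kernel_average k N xs z - predict \<mu> k q z\<bar> \<partial>?PQ)
        \<le> ennreal (M / sqrt N) * indicator S z + 2 * (\<integral>\<^sup>+x. ennreal (q x * kernel_tail M S x z) \<partial>\<mu>)"
      by (cases "z \<in> S") (simp_all add: kernel_tail_def)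
  qed
  also have "\<dots> = ennreal (M / sqrt N) * emeasure \<mu> S + 2 * tail_mass M S q"
  proof -
    have "(\<lambda>z. \<integral>\<^sup>+x. ennreal (q x * kernel_tail M S x z) \<partial>\<mu>) \<in> borel_measurable \<mu>"
    proof -
      have "(\<lambda>(z, x). ennreal (q x * kernel_tail M S x z)) \<in> borel_measurable (\<mu> \<Otimes>\<^sub>M \<mu>)"
        by measurable
      then show ?thesis by (rule borel_measurable_nn_integral)
    qed
    then show ?thesis
      by (simp add: nn_integral_add nn_integral_cmult nn_integral_cmult_indicator tail_mass_def)
  qed
  finally show ?thesis .
qed

lemma nn_integral_L1_dist_kernel_average_predict_le:
  assumes q: "prob_density \<mu> q" and h: "prob_density \<mu> h"
    and N: "1 \<le> N" and M: "0 \<le> M" and S: "S \<in> sets \<mu>"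
  shows "(\<integral>\<^sup>+xs. L1_dist \<mu> (kernel_average k N xs) (predict \<mu> k h)
      \<partial>PiM {..<N} (\<lambda>_. density \<mu> (\<lambda>x. ennreal (q x))))
    \<le> ennreal (M / sqrt N) * emeasure \<mu> S + 2 * tail_mass M S h + 3 * L1_dist \<mu> q h"
proof -
  let ?PQ = "PiM {..<N} (\<lambda>_. density \<mu> (\<lambda>x. ennreal (q x)))"
  interpret PQ: prob_space ?PQ by (rule prob_space_PiM_density[OF q])
  have [measurable]: "h \<in> borel_measurable \<mu>" "q \<in> borel_measurable \<mu>"
    using h q by (auto dest: prob_density_measurable)
  have [measurable]: "(\<lambda>xs. L1_dist \<mu> (kernel_average k N xs) (predict \<mu> k q)) \<in> borel_measurable ?PQ"
    using measurable_kernel_average[OF sets_PiM_density]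
    by (intro L1_dist_measurable sigma_finite_measure_axioms predict_measurable
        prob_density_measurable[OF q])
  have "(\<integral>\<^sup>+xs. L1_dist \<mu> (kernel_average k N xs) (predict \<mu> k h) \<partial>?PQ)
      \<le> (\<integral>\<^sup>+xs. L1_dist \<mu> (kernel_average k N xs) (predict \<mu> k q)
          + L1_dist \<mu> (predict \<mu> k q) (predict \<mu> k h) \<partial>?PQ)"
    using prob_density_kernel_average[OF N]
    by (intro nn_integral_mono L1_dist_triangle predict_measurable) (auto dest: prob_density_measurable)
  also have "\<dots> = (\<integral>\<^sup>+xs. L1_dist \<mu> (kernel_average k N xs) (predict \<mu> k q) \<partial>?PQ)
      + L1_dist \<mu> (predict \<mu> k q) (predict \<mu> k h)"
    by (simp add: nn_integral_add PQ.emeasure_space_1)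
  also have "\<dots> \<le> ennreal (M / sqrt N) * emeasure \<mu> S + 2 * tail_mass M S q + L1_dist \<mu> q h"
    by (intro add_mono nn_integral_L1_dist_kernel_average_le L1_dist_predict_le q h N M S)
  also have "\<dots> \<le> ennreal (M / sqrt N) * emeasure \<mu> S + 2 * (tail_mass M S h + L1_dist \<mu> q h)
      + L1_dist \<mu> q h"
    by (intro add_mono mult_left_mono tail_mass_le order_refl q h M S) simp
  also have "\<dots> = ennreal (M / sqrt N) * emeasure \<mu> S + 2 * tail_mass M S h + 3 * L1_dist \<mu> q h"
  proof -
    have "(3::ennreal) = 2 + 1" by simp
    then show ?thesis by (simp only: distrib_right distrib_left mult_1 add.assoc)
  qed
  finally show ?thesis .
qed

lemma kernel_average_uniformly_close:
  assumes h: "prob_density \<mu> h" and \<gamma>: "0 < \<gamma>"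
  shows "\<exists>\<delta>>0. \<exists>N0. \<forall>N\<ge>N0. \<forall>q. prob_density \<mu> q \<longrightarrow> L1_dist \<mu> q h \<le> ennreal \<delta> \<longrightarrow>
    (\<integral>\<^sup>+xs. L1_dist \<mu> (kernel_average k N xs) (predict \<mu> k h)
      \<partial>PiM {..<N} (\<lambda>_. density \<mu> (\<lambda>x. ennreal (q x)))) \<le> ennreal \<gamma>"
proof -
  define \<delta> where "\<delta> = \<gamma> / 6"
  have \<delta>: "0 < \<delta>" unfolding \<delta>_def using \<gamma> by simp
  obtain M S where M: "0 \<le> M" and S: "S \<in> sets \<mu>" "emeasure \<mu> S < \<infinity>"
    and tail_h: "tail_mass M S h < ennreal \<delta>"
    using tail_mass_small[OF h \<delta>] by blast
  define s where "s = enn2real (emeasure \<mu> S)"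
  have s: "0 \<le> s" "emeasure \<mu> S = ennreal s"
    using S(2) by (auto simp: s_def top.not_eq_extremum ennreal_enn2real_if)
  define N0 where "N0 = max 1 (nat \<lceil>(M * s / \<delta>)\<^sup>2\<rceil>)"
  have "(\<integral>\<^sup>+xs. L1_dist \<mu> (kernel_average k N xs) (predict \<mu> k h)
      \<partial>PiM {..<N} (\<lambda>_. density \<mu> (\<lambda>x. ennreal (q x)))) \<le> ennreal \<gamma>"
    if N: "N0 \<le> N" and q: "prob_density \<mu> q" and qh: "L1_dist \<mu> q h \<le> ennreal \<delta>" for N q
  proof -
    have N1: "1 \<le> N" using N by (simp add: N0_def)
    have "(M * s / \<delta>)\<^sup>2 \<le> real N" using N unfolding N0_def by linarith
    then have "M * s / \<delta> \<le> sqrt N" by (rule real_le_rsqrt)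
    then have sampling: "ennreal (M / sqrt N) * emeasure \<mu> S \<le> ennreal \<delta>"
      using N1 \<delta> M s by (simp add: field_simps ennreal_leI flip: ennreal_mult)
    have "(\<integral>\<^sup>+xs. L1_dist \<mu> (kernel_average k N xs) (predict \<mu> k h)
        \<partial>PiM {..<N} (\<lambda>_. density \<mu> (\<lambda>x. ennreal (q x))))
      \<le> ennreal (M / sqrt N) * emeasure \<mu> S + 2 * tail_mass M S h + 3 * L1_dist \<mu> q h"
      by (rule nn_integral_L1_dist_kernel_average_predict_le[OF q h N1 M S(1)])
    also have "\<dots> \<le> ennreal \<delta> + 2 * ennreal \<delta> + 3 * ennreal \<delta>"
      using sampling tail_h qh by (intro add_mono mult_left_mono) (auto simp: less_imp_le)
    also have "\<dots> = 6 * ennreal \<delta>"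
    proof -
      have "(6::ennreal) = 1 + 2 + 3" by simp
      then show ?thesis by (simp only: distrib_right mult_1)
    qed
    also have "\<dots> = ennreal (6 * \<delta>)"
      using \<delta> by (simp add: ennreal_mult)
    also have "\<dots> = ennreal \<gamma>"
      by (simp add: \<delta>_def)
    finally show ?thesis .
  qed
  then show ?thesis using \<delta> by blast
qed
end

section \<open>The particle filter\<close>

locale particle_filter = sigma_finite_measure \<mu> for \<mu> :: "'a measure" +
  fixes a0 :: "'a \<Rightarrow> real" and a :: "nat \<Rightarrow> 'a \<Rightarrow> 'a \<Rightarrow> real"
    and b :: "nat \<Rightarrow> 'a \<Rightarrow> 'b \<Rightarrow> real" and y :: "nat \<Rightarrow> 'b"
  assumes initial_density: "prob_density \<mu> a0"
    and transition_kernel: "\<And>t. 1 \<le> t \<Longrightarrow> density_kernel \<mu> (a t)"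
    and likelihood: "\<And>t. 1 \<le> t \<Longrightarrow> \<exists>c. bounded_likelihood \<mu> (\<lambda>x. b t x (y t)) c"
begin

lemma filt_Suc_eq:
  "filt \<mu> a0 a b y (Suc t)
    = reweight \<mu> (\<lambda>x. b (Suc t) x (y (Suc t))) (predict \<mu> (a (Suc t)) (filt \<mu> a0 a b y t))"
  by (simp add: reweight_def[abs_def] predict_def[abs_def] Let_def)

lemma mc_dens_eq: "mc_dens \<mu> a b y N t xs = reweight \<mu> (\<lambda>x. b t x (y t)) (kernel_average (a t) N xs)"
  by (simp add: mc_dens_def reweight_def[abs_def] kernel_average_def[abs_def] Let_def)

lemma prob_density_filt: "prob_density \<mu> (filt \<mu> a0 a b y t)"
proof (induction t)
  case (Suc t)
  obtain c where "bounded_likelihood \<mu> (\<lambda>x. b (Suc t) x (y (Suc t))) c"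
    using likelihood[of "Suc t"] by auto
  then show ?case
    unfolding filt_Suc_eq
    by (intro bounded_likelihood.prob_density_reweight density_kernel.prob_density_predict
        transition_kernel Suc) simp_all
qed (simp add: initial_density)

lemma prob_density_mc_dens:
  assumes "1 \<le> N" "1 \<le> t"
  shows "prob_density \<mu> (mc_dens \<mu> a b y N t xs)"
proof -
  obtain c where "bounded_likelihood \<mu> (\<lambda>x. b t x (y t)) c" using likelihood assms(2) by blast
  then show ?thesis
    unfolding mc_dens_eq
    by (intro bounded_likelihood.prob_density_reweight density_kernel.prob_density_kernel_average
        transition_kernel assms)
qed

lemma prob_density_filtN: "1 \<le> N \<Longrightarrow> prob_density \<mu> (filtN \<mu> a0 a b y N t xs)"
  by (simp add: filtN_def initial_density prob_density_mc_dens)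

lemma measurable_mc_dens:
  assumes t: "1 \<le> t" and R: "sets R = sets (PiM {..<N} (\<lambda>_. \<mu>))"
  shows "(\<lambda>p. mc_dens \<mu> a b y N t (fst p) (snd p)) \<in> borel_measurable (R \<Otimes>\<^sub>M \<mu>)"
proof -
  obtain c where "bounded_likelihood \<mu> (\<lambda>x. b t x (y t)) c" using likelihood t by blast
  then show ?thesis
    unfolding mc_dens_eq
    by (intro measurable_reweight sigma_finite_measure_axioms bounded_likelihood.likelihood_measurable
        density_kernel.measurable_kernel_average[OF transition_kernel[OF t] R])
qed

lemma measurable_filtN:
  assumes R: "sets R = sets (PiM {..<N} (\<lambda>_. \<mu>))"
  shows "(\<lambda>p. filtN \<mu> a0 a b y N t (fst p) (snd p)) \<in> borel_measurable (R \<Otimes>\<^sub>M \<mu>)"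
proof (cases "t = 0")
  case True
  then show ?thesis
    using measurable_compose[OF measurable_snd prob_density_measurable[OF initial_density]]
    by (simp add: filtN_def)
next
  case False
  then show ?thesis using measurable_mc_dens[OF _ R, of t] by (simp add: filtN_def)
qed

lemma
  assumes N: "1 \<le> N"
  shows prob_space_particles: "prob_space (particles \<mu> a0 a b y N t)"
    and sets_particles: "sets (particles \<mu> a0 a b y N t) = sets (PiM {..<N} (\<lambda>_. \<mu>))"
proof -
  have "prob_space (particles \<mu> a0 a b y N t)
      \<and> sets (particles \<mu> a0 a b y N t) = sets (PiM {..<N} (\<lambda>_. \<mu>))"
  proof (induction t)
    case 0
    show ?case
      by (auto simp: sets_PiM_density intro!: prob_space_PiM_density initial_density)
  next
    case (Suc t)
    let ?R = "particles \<mu> a0 a b y N t"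
    let ?K = "\<lambda>xs. PiM {..<N} (\<lambda>_. density \<mu> (\<lambda>x. ennreal (mc_dens \<mu> a b y N (Suc t) xs x)))"
    interpret R: prob_space ?R using Suc by simp
    have K: "?K \<in> measurable ?R (subprob_algebra (PiM {..<N} (\<lambda>_. \<mu>)))"
      using Suc by (intro measurable_PiM_density measurable_mc_dens prob_density_mc_dens N) auto
    have "prob_space (?R \<bind> ?K)"
      by (rule R.prob_space_bind[OF _ K]) (auto intro!: prob_space_PiM_density prob_density_mc_dens N)
    moreover have "sets (?R \<bind> ?K) = sets (PiM {..<N} (\<lambda>_. \<mu>))"
      by (rule sets_bind) (auto simp: sets_PiM_density R.not_empty)
    ultimately show ?case by simp
  qed
  then show "prob_space (particles \<mu> a0 a b y N t)"
    and "sets (particles \<mu> a0 a b y N t) = sets (PiM {..<N} (\<lambda>_. \<mu>))" by auto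
qed

lemma emeasure_particles:
  assumes N: "1 \<le> N" and A: "A \<in> sets (PiM {..<N} (\<lambda>_. \<mu>))"
  shows "emeasure (particles \<mu> a0 a b y N t) A
    = (\<integral>\<^sup>+w. emeasure (PiM {..<N} (\<lambda>_. density \<mu> (\<lambda>x. ennreal (filtN \<mu> a0 a b y N t w x)))) A
         \<partial>particles \<mu> a0 a b y N (t - 1))"
proof (cases t)
  case 0
  interpret prob_space "particles \<mu> a0 a b y N 0" by (rule prob_space_particles[OF N])
  show ?thesis using 0 emeasure_space_1 by (simp add: filtN_def)
next
  case (Suc s)
  let ?R = "particles \<mu> a0 a b y N s"
  interpret R: prob_space ?R by (rule prob_space_particles[OF N])
  have "(\<lambda>xs. PiM {..<N} (\<lambda>_. density \<mu> (\<lambda>x. ennreal (mc_dens \<mu> a b y N (Suc s) xs x))))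
      \<in> measurable ?R (subprob_algebra (PiM {..<N} (\<lambda>_. \<mu>)))"
    by (intro measurable_PiM_density measurable_mc_dens prob_density_mc_dens sets_particles N) auto
  from emeasure_bind[OF R.not_empty this A] show ?thesis using Suc by (simp add: filtN_def)
qed

definition deviation_prob :: "nat \<Rightarrow> nat \<Rightarrow> real \<Rightarrow> real" where
  "deviation_prob N t \<epsilon> = measure (particles \<mu> a0 a b y N (t - 1))
    {xs \<in> space (particles \<mu> a0 a b y N (t - 1)).
      ennreal \<epsilon> < L1_dist \<mu> (filtN \<mu> a0 a b y N t xs) (filt \<mu> a0 a b y t)}"

definition mc_deviation_prob :: "nat \<Rightarrow> nat \<Rightarrow> ('a \<Rightarrow> real) \<Rightarrow> ('a \<Rightarrow> real) \<Rightarrow> real \<Rightarrow> ennreal" where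
  "mc_deviation_prob N t q f \<epsilon> = emeasure (PiM {..<N} (\<lambda>_. density \<mu> (\<lambda>x. ennreal (q x))))
    {xs \<in> space (PiM {..<N} (\<lambda>_. density \<mu> (\<lambda>x. ennreal (q x)))).
      ennreal \<epsilon> < L1_dist \<mu> (mc_dens \<mu> a b y N t xs) f}"

lemma mc_deviation_prob_Markov:
  assumes t: "1 \<le> t" and h: "prob_density \<mu> h"
  obtains K where "0 < K"
    and "\<And>N q \<epsilon>. 1 \<le> N \<Longrightarrow> prob_density \<mu> q \<Longrightarrow>
      ennreal \<epsilon> * mc_deviation_prob N t q (reweight \<mu> (\<lambda>x. b t x (y t)) (predict \<mu> (a t) h)) \<epsilon>
      \<le> ennreal K * (\<integral>\<^sup>+xs. L1_dist \<mu> (kernel_average (a t) N xs) (predict \<mu> (a t) h)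
          \<partial>PiM {..<N} (\<lambda>_. density \<mu> (\<lambda>x. ennreal (q x))))"
proof -
  interpret kernel: density_kernel \<mu> "a t" by (rule transition_kernel[OF t])
  obtain c where "bounded_likelihood \<mu> (\<lambda>x. b t x (y t)) c" using likelihood t by blast
  then interpret likelihood: bounded_likelihood \<mu> "\<lambda>x. b t x (y t)" c .
  have pred_h: "prob_density \<mu> (predict \<mu> (a t) h)" by (rule kernel.prob_density_predict[OF h])
  define K where "K = 2 * c / (\<integral>x. b t x (y t) * predict \<mu> (a t) h x \<partial>\<mu>)"
  have "0 < K"
    using likelihood.integral_likelihood_mult_pos[OF pred_h]
      likelihood.likelihood_pos[of undefined] likelihood.likelihood_le[of undefined]
    by (simp add: K_def)
  moreover have "ennreal \<epsilon> * mc_deviation_prob N t q (reweight \<mu> (\<lambda>x. b t x (y t)) (predict \<mu> (a t) h)) \<epsilon>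
      \<le> ennreal K * (\<integral>\<^sup>+xs. L1_dist \<mu> (kernel_average (a t) N xs) (predict \<mu> (a t) h)
          \<partial>PiM {..<N} (\<lambda>_. density \<mu> (\<lambda>x. ennreal (q x))))"
    if N: "1 \<le> N" and q: "prob_density \<mu> q" for N q \<epsilon>
  proof -
    let ?PQ = "PiM {..<N} (\<lambda>_. density \<mu> (\<lambda>x. ennreal (q x)))"
    let ?u = "\<lambda>xs. ennreal K * L1_dist \<mu> (kernel_average (a t) N xs) (predict \<mu> (a t) h)"
    have [measurable]: "(\<lambda>xs. L1_dist \<mu> (kernel_average (a t) N xs) (predict \<mu> (a t) h))
        \<in> borel_measurable ?PQ"
      by (intro L1_dist_measurable sigma_finite_measure_axioms kernel.measurable_kernel_average
          sets_PiM_density kernel.predict_measurable prob_density_measurable[OF h])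
    have "L1_dist \<mu> (mc_dens \<mu> a b y N t xs) (reweight \<mu> (\<lambda>x. b t x (y t)) (predict \<mu> (a t) h)) \<le> ?u xs"
      for xs
      unfolding mc_dens_eq K_def
      by (intro likelihood.L1_dist_reweight_le kernel.prob_density_kernel_average pred_h N)
    then have "ennreal \<epsilon> * mc_deviation_prob N t q (reweight \<mu> (\<lambda>x. b t x (y t)) (predict \<mu> (a t) h)) \<epsilon>
        \<le> ennreal \<epsilon> * emeasure ?PQ {xs \<in> space ?PQ. ennreal \<epsilon> < ?u xs}"
      unfolding mc_deviation_prob_def by (intro mult_left_mono emeasure_mono) (auto intro: less_le_trans)
    also have "\<dots> \<le> (\<integral>\<^sup>+xs. ?u xs \<partial>?PQ)"
      by (rule mult_emeasure_le_nn_integral) measurable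
    finally show ?thesis by (simp add: nn_integral_cmult)
  qed
  ultimately show ?thesis using that by blast
qed

lemma mc_deviation_prob_uniformly_small:
  assumes t: "1 \<le> t" and h: "prob_density \<mu> h" and \<epsilon>: "0 < \<epsilon>" and \<gamma>: "0 < \<gamma>"
  shows "\<exists>\<delta>>0. \<exists>N0. \<forall>N\<ge>N0. \<forall>q. prob_density \<mu> q \<longrightarrow> L1_dist \<mu> q h \<le> ennreal \<delta> \<longrightarrow>
    mc_deviation_prob N t q (reweight \<mu> (\<lambda>x. b t x (y t)) (predict \<mu> (a t) h)) \<epsilon> \<le> ennreal \<gamma>"
proof -
  interpret kernel: density_kernel \<mu> "a t" by (rule transition_kernel[OF t])
  obtain K where K: "0 < K" and Markov: "\<And>N q \<epsilon>. 1 \<le> N \<Longrightarrow> prob_density \<mu> q \<Longrightarrow>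
      ennreal \<epsilon> * mc_deviation_prob N t q (reweight \<mu> (\<lambda>x. b t x (y t)) (predict \<mu> (a t) h)) \<epsilon>
      \<le> ennreal K * (\<integral>\<^sup>+xs. L1_dist \<mu> (kernel_average (a t) N xs) (predict \<mu> (a t) h)
          \<partial>PiM {..<N} (\<lambda>_. density \<mu> (\<lambda>x. ennreal (q x))))"
    using mc_deviation_prob_Markov[OF t h] by blast
  obtain \<delta> N0 where \<delta>: "0 < \<delta>" and close: "\<forall>N\<ge>N0. \<forall>q. prob_density \<mu> q \<longrightarrow> L1_dist \<mu> q h \<le> ennreal \<delta> \<longrightarrow>
      (\<integral>\<^sup>+xs. L1_dist \<mu> (kernel_average (a t) N xs) (predict \<mu> (a t) h)
        \<partial>PiM {..<N} (\<lambda>_. density \<mu> (\<lambda>x. ennreal (q x)))) \<le> ennreal (\<epsilon> * \<gamma> / K)"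
    using kernel.kernel_average_uniformly_close[OF h, of "\<epsilon> * \<gamma> / K"] \<epsilon> \<gamma> K by auto
  have "mc_deviation_prob N t q (reweight \<mu> (\<lambda>x. b t x (y t)) (predict \<mu> (a t) h)) \<epsilon> \<le> ennreal \<gamma>"
    if N: "max N0 1 \<le> N" and q: "prob_density \<mu> q" and qh: "L1_dist \<mu> q h \<le> ennreal \<delta>" for N q
  proof -
    have "ennreal \<epsilon> * mc_deviation_prob N t q (reweight \<mu> (\<lambda>x. b t x (y t)) (predict \<mu> (a t) h)) \<epsilon>
        \<le> ennreal K * ennreal (\<epsilon> * \<gamma> / K)"
      using Markov[of N q \<epsilon>] close N q qh by (auto elim!: order_trans intro!: mult_left_mono)
    also have "\<dots> = ennreal \<epsilon> * ennreal \<gamma>"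
      using K \<epsilon> \<gamma> by (simp flip: ennreal_mult)
    finally show ?thesis
      using \<epsilon> by (subst (asm) ennreal_mult_le_mult_iff) auto
  qed
  then show ?thesis using \<delta> by blast
qed

lemma deviation_prob_Suc_le:
  assumes N: "1 \<le> N" and \<gamma>: "0 \<le> \<gamma>"
    and close: "\<And>q. prob_density \<mu> q \<Longrightarrow> L1_dist \<mu> q (filt \<mu> a0 a b y s) \<le> ennreal \<delta> \<Longrightarrow>
      mc_deviation_prob N (Suc s) q (filt \<mu> a0 a b y (Suc s)) \<epsilon> \<le> ennreal \<gamma>"
  shows "deviation_prob N (Suc s) \<epsilon> \<le> \<gamma> + deviation_prob N s \<delta>"
proof -
  let ?R = "particles \<mu> a0 a b y N s" and ?R' = "particles \<mu> a0 a b y N (s - 1)"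
  let ?E = "{xs \<in> space ?R.
    ennreal \<epsilon> < L1_dist \<mu> (filtN \<mu> a0 a b y N (Suc s) xs) (filt \<mu> a0 a b y (Suc s))}"
  let ?B = "{w \<in> space ?R'. ennreal \<delta> < L1_dist \<mu> (filtN \<mu> a0 a b y N s w) (filt \<mu> a0 a b y s)}"
  interpret R: prob_space ?R by (rule prob_space_particles[OF N])
  interpret R': prob_space ?R' by (rule prob_space_particles[OF N])
  have L1_measurable: "(\<lambda>xs. L1_dist \<mu> (filtN \<mu> a0 a b y N t xs) (filt \<mu> a0 a b y t))
      \<in> borel_measurable (particles \<mu> a0 a b y N r)" for t r
    by (rule L1_dist_measurable[OF sigma_finite_measure_axioms measurable_filtN[OF sets_particles[OF N]]
        prob_density_measurable[OF prob_density_filt]])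
  note [measurable] = L1_measurable[of "Suc s" s] L1_measurable[of s "s - 1"]
  have "?E \<in> R.events" by measurable
  then have E: "?E \<in> sets (PiM {..<N} (\<lambda>_. \<mu>))" by (simp only: sets_particles[OF N])
  have B: "?B \<in> R'.events" by measurable
  have space_R: "space ?R = space (PiM {..<N} (\<lambda>_. \<mu>))"
    by (rule sets_eq_imp_space_eq[OF sets_particles[OF N]])
  have "emeasure ?R ?E
      = (\<integral>\<^sup>+w. emeasure (PiM {..<N} (\<lambda>_. density \<mu> (\<lambda>x. ennreal (filtN \<mu> a0 a b y N s w x)))) ?E \<partial>?R')"
    by (rule emeasure_particles[OF N E])
  also have "\<dots> \<le> ennreal \<gamma> + emeasure ?R' ?B"
  proof (rule R'.nn_integral_le_add_emeasure[OF B])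
    fix w assume w: "w \<in> space ?R'"
    let ?PQ = "PiM {..<N} (\<lambda>_. density \<mu> (\<lambda>x. ennreal (filtN \<mu> a0 a b y N s w x)))"
    interpret PQ: prob_space ?PQ by (intro prob_space_PiM_density prob_density_filtN N)
    show "emeasure ?PQ ?E \<le> 1" by (rule PQ.emeasure_le_1)
    assume "w \<notin> ?B"
    then have "L1_dist \<mu> (filtN \<mu> a0 a b y N s w) (filt \<mu> a0 a b y s) \<le> ennreal \<delta>" using w by auto
    from close[OF prob_density_filtN[OF N] this]
    show "emeasure ?PQ ?E \<le> ennreal \<gamma>"
      unfolding mc_deviation_prob_def space_R sets_eq_imp_space_eq[OF sets_PiM_density]
      by (simp add: filtN_def)
  qed
  finally have "ennreal (measure ?R ?E) \<le> ennreal \<gamma> + ennreal (measure ?R' ?B)"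
    by (simp only: R.emeasure_eq_measure R'.emeasure_eq_measure)
  also have "\<dots> = ennreal (\<gamma> + measure ?R' ?B)"
    by (intro ennreal_plus[symmetric] \<gamma> measure_nonneg)
  finally show ?thesis
    unfolding deviation_prob_def diff_Suc_1
    by (rule ennreal_le_iff[THEN iffD1, OF add_nonneg_nonneg[OF \<gamma> measure_nonneg]])
qed

lemma deviation_prob_tendsto_zero:
  assumes "0 < \<epsilon>"
  shows "(\<lambda>N. deviation_prob N t \<epsilon>) \<longlonglongrightarrow> 0"
  using assms
proof (induction t arbitrary: \<epsilon>)
  case 0
  then show ?case by (simp add: deviation_prob_def filtN_def L1_dist_def)
next
  case (Suc s)
  show ?case
  proof (rule LIMSEQ_I)
    fix r :: real assume r: "0 < r"
    obtain \<delta> N0 where \<delta>: "0 < \<delta>" and close: "\<forall>N\<ge>N0. \<forall>q. prob_density \<mu> q \<longrightarrow>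
        L1_dist \<mu> q (filt \<mu> a0 a b y s) \<le> ennreal \<delta> \<longrightarrow>
        mc_deviation_prob N (Suc s) q (filt \<mu> a0 a b y (Suc s)) \<epsilon> \<le> ennreal (r / 2)"
      using mc_deviation_prob_uniformly_small[of "Suc s" "filt \<mu> a0 a b y s" \<epsilon> "r / 2"]
        prob_density_filt Suc.prems r
      unfolding filt_Suc_eq by auto
    obtain N1 where N1: "\<forall>N\<ge>N1. norm (deviation_prob N s \<delta> - 0) < r / 2"
      using LIMSEQ_D[OF Suc.IH[OF \<delta>], of "r / 2"] r by auto
    have "deviation_prob N (Suc s) \<epsilon> < r" if "max (max N0 N1) 1 \<le> N" for N
    proof -
      have "deviation_prob N (Suc s) \<epsilon> \<le> r / 2 + deviation_prob N s \<delta>"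
        using that r close by (intro deviation_prob_Suc_le) auto
      then show ?thesis using N1 that by fastforce
    qed
    moreover have "0 \<le> deviation_prob N (Suc s) \<epsilon>" for N by (simp add: deviation_prob_def)
    ultimately show "\<exists>N2. \<forall>N\<ge>N2. norm (deviation_prob N (Suc s) \<epsilon> - 0) < r"
      by (intro exI[of _ "max (max N0 N1) 1"]) auto
  qed
qed

end

theorem theorem1:
  fixes \<mu> :: "'a::polish_space measure" and \<nu> :: "'b measure"
    and a0 :: "'a \<Rightarrow> real" and a :: "nat \<Rightarrow> 'a \<Rightarrow> 'a \<Rightarrow> real"
    and b :: "nat \<Rightarrow> 'a \<Rightarrow> 'b \<Rightarrow> real" and C :: "nat \<Rightarrow> 'b \<Rightarrow> real"
    and y :: "nat \<Rightarrow> 'b"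
  assumes sets_mu: "sets \<mu> = sets borel"
    and sf_mu: "sigma_finite_measure \<mu>"
    and sf_nu: "sigma_finite_measure \<nu>"
    and a0_meas: "a0 \<in> borel_measurable \<mu>"
    and a0_nonneg: "\<forall>x. 0 \<le> a0 x"
    and a0_int: "(\<integral>\<^sup>+x. ennreal (a0 x) \<partial>\<mu>) = 1"
    and a_meas: "\<forall>t\<ge>1. (\<lambda>(x', x). a t x' x) \<in> borel_measurable (\<mu> \<Otimes>\<^sub>M \<mu>)"
    and a_nonneg: "\<forall>t\<ge>1. \<forall>x' x. 0 \<le> a t x' x"
    and a_int: "\<forall>t\<ge>1. \<forall>x'. (\<integral>\<^sup>+x. ennreal (a t x' x) \<partial>\<mu>) = 1"
    and a_cont: "\<forall>t\<ge>1. \<forall>x0. ((\<lambda>x. \<integral>z. \<bar>a t x z - a t x0 z\<bar> \<partial>\<mu>) \<longlongrightarrow> 0) (at x0)"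
    and b_meas: "\<forall>t\<ge>1. (\<lambda>(x, v). b t x v) \<in> borel_measurable (\<mu> \<Otimes>\<^sub>M \<nu>)"
    and b_int: "\<forall>t\<ge>1. \<forall>x. (\<integral>\<^sup>+v. ennreal (b t x v) \<partial>\<nu>) = 1"
    and b_bound: "\<forall>t x v. 0 < b t x v \<and> b t x v \<le> C t v"
    and y_space: "\<forall>t. y t \<in> space \<nu>"
  shows "\<forall>t. \<forall>\<epsilon>>0.
    ((\<lambda>N. measure (particles \<mu> a0 a b y N (t - 1))
        {xs \<in> space (particles \<mu> a0 a b y N (t - 1)).
           ennreal \<epsilon> < L1_dist \<mu> (filtN \<mu> a0 a b y N t xs) (filt \<mu> a0 a b y t)})
      \<longlongrightarrow> 0) sequentially"
proof -
  have init: "prob_density \<mu> a0"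
    using a0_meas a0_nonneg a0_int by (simp add: prob_density_def)
  have space_mu: "space \<mu> = UNIV" using sets_eq_imp_space_eq[OF sets_mu] by simp
  have kernel: "density_kernel \<mu> (a t)" if "1 \<le> t" for t
    using a_meas a_nonneg a_int that
    by (intro density_kernel.intro sf_mu density_kernel_axioms.intro space_mu) auto
  have likelihood: "bounded_likelihood \<mu> (\<lambda>x. b t x (y t)) (C t (y t))" if "1 \<le> t" for t
  proof
    have "(\<lambda>x. (x, y t)) \<in> measurable \<mu> (\<mu> \<Otimes>\<^sub>M \<nu>)" using y_space by (intro measurable_Pair) auto
    from measurable_compose[OF this b_meas[rule_format, OF that]]
    show "(\<lambda>x. b t x (y t)) \<in> borel_measurable \<mu>" by simp
    show "0 < b t x (y t)" "b t x (y t) \<le> C t (y t)" for x using b_bound by auto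
  qed
  interpret particle_filter \<mu> a0 a b y
    using likelihood
    by (intro particle_filter.intro sf_mu particle_filter_axioms.intro init kernel) blast+
  show ?thesis using deviation_prob_tendsto_zero unfolding deviation_prob_def by blast
qed

end
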